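(* Let $m\le n$ and let $\theta(Z)=\|Z\|_2$ be the spectral norm on $\mathbb{R}^{m\times n}$. Let $P,W\in\mathbb{R}^{m\times n}$ with $P\neq0$ and $W\in\partial\theta(P)$, and let $Q=P+W$. Let $D,H\in\mathbb{R}^{m\times n}$. If $H=\mathrm{Prox}_\theta'(Q;H+D)$, then $H\in\mathcal C_\theta(P,W)$ and $\langle H,D\rangle=-\psi^*_{(P,H)}(W)$.
   Context: $\mathbb{R}^{m\times n}$ carries the inner product $\langle A,B\rangle=\mathrm{trace}(A^TB)$. $\mathrm{Prox}_\theta(Z)=\arg\min_{Z'}\{\theta(Z')+\frac12\|Z'-Z\|^2\}$ is the proximal mapping of $\theta$, and $\mathrm{Prox}_\theta'(Q;D)$ denotes its (existing) directional derivative at $Q$ in direction $D$. $\theta'(P;D)$ is the directional derivative of $\theta$; the critical cone is $\mathcal C_\theta(P,W)=\{D:\theta'(P;D)=\langle D,W\rangle\}$. Second-order directional derivative: $\theta''(P;D,Z)=\lim_{t\downarrow0}\frac{\theta(P+tD+\frac12t^2Z)-\theta(P)-t\theta'(P;D)}{\frac12t^2}$, and $\psi^*_{(P,D)}(W):=\sup_Z\{\langle W,Z\rangle-\theta''(P;D,Z)\}$. *)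

theory Defs
  imports "HOL-Analysis.Analysis"
begin

text \<open>Matrices in R^{m x n} are rendered as real^'n^'m (rows indexed by 'm).
  The vector inner product on this type is sum_{i,j} A_ij B_ij = trace(A^T B),
  and norm is the Frobenius norm.\<close>

definition spec_norm :: "real^'n^'m \<Rightarrow> real" where
  "spec_norm A = onorm (\<lambda>x. A *v x)"

definition subdiff :: "('a::real_inner \<Rightarrow> real) \<Rightarrow> 'a \<Rightarrow> 'a set" where
  "subdiff \<theta> P = {W. \<forall>Z. \<theta> Z \<ge> \<theta> P + W \<bullet> (Z - P)}"

definition prox :: "('a::real_inner \<Rightarrow> real) \<Rightarrow> 'a \<Rightarrow> 'a" where
  "prox \<theta> Z = (THE Z'. \<forall>Y. \<theta> Z' + (norm (Z' - Z))\<^sup>2 / 2 \<le> \<theta> Y + (norm (Y - Z))\<^sup>2 / 2)"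

definition has_dir_deriv :: "('a::real_normed_vector \<Rightarrow> 'b::real_normed_vector) \<Rightarrow> 'a \<Rightarrow> 'a \<Rightarrow> 'b \<Rightarrow> bool" where
  "has_dir_deriv f Q D V \<longleftrightarrow> ((\<lambda>t. (f (Q + t *\<^sub>R D) - f Q) /\<^sub>R t) \<longlongrightarrow> V) (at_right 0)"

definition dir_deriv :: "('a::real_normed_vector \<Rightarrow> real) \<Rightarrow> 'a \<Rightarrow> 'a \<Rightarrow> real" where
  "dir_deriv \<theta> P D = Lim (at_right 0) (\<lambda>t. (\<theta> (P + t *\<^sub>R D) - \<theta> P) / t)"

definition crit_cone :: "('a::real_inner \<Rightarrow> real) \<Rightarrow> 'a \<Rightarrow> 'a \<Rightarrow> 'a set" where
  "crit_cone \<theta> P W = {D. dir_deriv \<theta> P D = D \<bullet> W}"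

definition second_dir_deriv :: "('a::real_normed_vector \<Rightarrow> real) \<Rightarrow> 'a \<Rightarrow> 'a \<Rightarrow> 'a \<Rightarrow> real" where
  "second_dir_deriv \<theta> P D Z = Lim (at_right 0)
     (\<lambda>t. (\<theta> (P + t *\<^sub>R D + (t\<^sup>2 / 2) *\<^sub>R Z) - \<theta> P - t * dir_deriv \<theta> P D) / (t\<^sup>2 / 2))"

definition psi_star :: "('a::real_inner \<Rightarrow> real) \<Rightarrow> 'a \<Rightarrow> 'a \<Rightarrow> 'a \<Rightarrow> ereal" where
  "psi_star \<theta> P D W = (SUP Z. ereal (W \<bullet> Z - second_dir_deriv \<theta> P D Z))"

end

(* The derivative H = Prox'(P + W; H + D) is the limit of h_t = (Prox(P + W + t(H + D)) - P)/t,
   and W + t(H + D - h_t) is a subgradient at P + t h_t.  Comparing the subgradient inequalities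
   at P and at P + t h_t gives theta'(P; H) = <W, H>.  With phi(Z) = theta''(P; H, Z) - <W, Z> >= 0
   one has psi^*(W) = -inf phi, and testing the subgradient inequality at P + t h_t against
   P + lt H + (lt)^2/2 Z yields l^2 phi(Z) >= inf phi + 2 (l - 1) <D, H> for all l > 0, as soon as
   theta'' is a lower second-order model uniformly along curves P + t h_t with h_t -> H.  Equality
   holds at l = 1, so the derivative in l vanishes there: inf phi = <D, H>.

   For the spectral norm these second-order properties follow from the expansion
   theta(P + tH + t^2/2 Z)^2 = sigma^2 + t mu + t^2 nu(Z) + o(t^2), in which mu and nu(Z) are
   maxima over unit vectors a of the top singular space of P and corrections b orthogonal to it.
   Test vectors a + t b give the lower bound; the spectral gap and compactness give the upper one. *)

theory Submission
  imports Defs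
begin

lemma power2_norm_add_scaleR:
  fixes u v :: "'a::real_inner"
  shows "(norm (u + s *\<^sub>R v))\<^sup>2 = (norm u)\<^sup>2 + 2 * s * (u \<bullet> v) + s\<^sup>2 * (norm v)\<^sup>2"
  unfolding power2_norm_eq_inner
  by (simp add: inner_add_left inner_add_right inner_commute power2_eq_square algebra_simps)

lemma power2_norm_cubic:
  fixes u0 u1 u2 u3 :: "'a::real_inner"
  shows "(norm (u0 + t *\<^sub>R u1 + t\<^sup>2 *\<^sub>R u2 + t^3 *\<^sub>R u3))\<^sup>2
    = (norm u0)\<^sup>2 + 2 * t * (u0 \<bullet> u1) + t\<^sup>2 * ((norm u1)\<^sup>2 + 2 * (u0 \<bullet> u2))
      + t^3 * (2 * (u0 \<bullet> u3) + 2 * (u1 \<bullet> u2) + t * ((norm u2)\<^sup>2 + 2 * (u1 \<bullet> u3))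
        + t\<^sup>2 * (2 * (u2 \<bullet> u3)) + t^3 * (norm u3)\<^sup>2)"
  unfolding power2_norm_eq_inner
  by (simp add: inner_add_left inner_add_right inner_commute[of u1 u0] inner_commute[of u2 u0]
      inner_commute[of u3 u0] inner_commute[of u2 u1] inner_commute[of u3 u1]
      inner_commute[of u3 u2] algebra_simps power2_eq_square power3_eq_cube)

lemma abs_power2_norm_diff_le:
  fixes u v :: "'a::real_inner"
  shows "\<bar>(norm u)\<^sup>2 - (norm v)\<^sup>2\<bar> \<le> norm (u - v) * (norm u + norm v)"
proof -
  have "(norm u)\<^sup>2 - (norm v)\<^sup>2 = (u - v) \<bullet> (u + v)"
    by (simp add: power2_norm_eq_inner inner_diff_left inner_diff_right inner_add_left
        inner_add_right inner_commute)
  also have "\<bar>\<dots>\<bar> \<le> norm (u - v) * norm (u + v)"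
    by (rule Cauchy_Schwarz_ineq2)
  also have "\<dots> \<le> norm (u - v) * (norm u + norm v)"
    by (simp add: mult_left_mono norm_triangle_ineq)
  finally show ?thesis .
qed

lemma eq_if_scaled_quadratic_bound:
  fixes p q :: real
  assumes "\<And>l. 0 < l \<Longrightarrow> p + 2 * (l - 1) * q \<le> l\<^sup>2 * p"
  shows "p = q"
proof -
  define f where "f l = l\<^sup>2 * p - 2 * l * q" for l
  have "(f has_real_derivative 2 * p - 2 * q) (at 1)"
    unfolding f_def by (auto intro!: derivative_eq_intros)
  moreover have "\<forall>y. \<bar>1 - y\<bar> < 1 \<longrightarrow> f 1 \<le> f y"
  proof (intro allI impI)
    fix y :: real
    assume "\<bar>1 - y\<bar> < 1"
    then have "p + 2 * (y - 1) * q \<le> y\<^sup>2 * p"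
      by (intro assms) linarith
    then show "f 1 \<le> f y"
      by (simp add: f_def algebra_simps)
  qed
  ultimately have "2 * p - 2 * q = 0"
    by (rule DERIV_local_min[OF _ zero_less_one])
  then show ?thesis by simp
qed

lemma le_linear_if_quadratic_le:
  fixes g c d t x :: real
  assumes "0 < g" "0 \<le> c" "0 \<le> d" "0 < t" "0 \<le> x" "g * x\<^sup>2 \<le> c * t * x + d * t\<^sup>2"
  shows "x \<le> (1 + (c + d) / g) * t"
proof (cases "x \<le> t")
  case True
  moreover have "0 \<le> (c + d) / g * t"
    using assms by simp
  ultimately show ?thesis
    by (simp add: distrib_right)
next
  case False
  then have "t * t \<le> t * x"
    using assms(4) by (intro mult_left_mono) auto
  then have "d * t\<^sup>2 \<le> d * t * x"
    using mult_left_mono[OF _ assms(3)] by (simp add: power2_eq_square mult.assoc)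
  then have "x * (g * x) \<le> x * ((c + d) * t)"
    using assms(6) by (simp add: power2_eq_square algebra_simps)
  then have "g * x \<le> (c + d) * t"
    using False assms(4) by simp
  then have "x \<le> (c + d) / g * t"
    using assms(1) by (simp add: field_simps)
  also have "\<dots> \<le> (1 + (c + d) / g) * t"
    using assms(4) by (simp add: algebra_simps)
  finally show ?thesis .
qed

lemma lower_bound_from_quotient:
  fixes d F L X Y S :: real
  assumes "1 \<le> d" "F = d * L - X" "\<bar>X\<bar> \<le> Y" "F / d \<le> S"
  shows "L - Y \<le> S"
proof -
  have "F / d = L - X / d"
    using assms(1,2) by (simp add: field_simps)
  moreover have "X / d \<le> Y"
  proof -
    have "X / d \<le> \<bar>X\<bar> / d"
      using assms(1) by (simp add: divide_right_mono)
    also have "\<dots> \<le> \<bar>X\<bar>"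
      using assms(1) by (simp add: divide_le_eq mult_le_cancel_left1 order_trans[OF _ mult_right_mono[OF assms(1)]])
    finally show ?thesis
      using assms(3) by linarith
  qed
  ultimately show ?thesis
    using assms(4) by linarith
qed

lemma sqrt_linearization:
  fixes s \<sigma> t c :: real
  assumes "\<sigma> \<noteq> 0" "t \<noteq> 0"
  shows "(s - \<sigma> - t * c) / (t\<^sup>2 / 2)
    = ((s\<^sup>2 - \<sigma>\<^sup>2 - t * (2 * \<sigma> * c)) / t\<^sup>2) / \<sigma> - ((s - \<sigma>) / t)\<^sup>2 / \<sigma>"
  using assms by (simp add: field_simps power2_eq_square)

lemma filterlim_scale_at_right_0:
  fixes l :: real
  assumes "0 < l"
  shows "filterlim (\<lambda>t. l * t) (at_right 0) (at_right 0)"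
proof (rule filterlim_at_withinI)
  have "((\<lambda>t. l * t) \<longlongrightarrow> l * 0) (at_right 0)"
    by (intro tendsto_intros)
  then show "((\<lambda>t. l * t) \<longlongrightarrow> 0) (at_right 0)" by simp
  show "\<forall>\<^sub>F t in at_right 0. l * t \<in> {0<..} - {0}"
    using eventually_at_right_less[of 0] by eventually_elim (use assms in simp)
qed

lemma eventually_penalized_less:
  fixes g \<delta> :: "'a::metric_space \<Rightarrow> real"
  assumes S: "compact S" and g: "continuous_on S g" and \<delta>: "continuous_on S \<delta>"
    and nonneg: "\<And>x. x \<in> S \<Longrightarrow> 0 \<le> \<delta> x"
    and zero: "\<And>x. x \<in> S \<Longrightarrow> \<delta> x = 0 \<Longrightarrow> g x \<le> M"
    and e: "0 < e"
  shows "\<forall>\<^sub>F t in at_right 0. \<forall>x\<in>S. g x - \<delta> x / t < M + e"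
proof -
  define K where "K = {x \<in> S. M + e \<le> g x}"
  have "closed K"
    unfolding K_def
    by (intro continuous_on_closed_Collect_le continuous_intros g compact_imp_closed S)
  moreover have "K = S \<inter> K"
    by (auto simp: K_def)
  ultimately have "compact K"
    using compact_Int_closed[OF S] by metis
  obtain Gm where Gm: "\<And>x. x \<in> S \<Longrightarrow> g x \<le> Gm"
    using bounded_imp_bdd_above[OF compact_imp_bounded[OF compact_continuous_image[OF g S]]]
    by (auto simp: bdd_above_def)
  have outside: "g x - \<delta> x / t < M + e" if "x \<in> S" "x \<notin> K" "0 < t" for x t
  proof -
    have "0 \<le> \<delta> x / t"
      using that nonneg[of x] by simp
    moreover have "g x < M + e"
      using that by (simp add: K_def)
    ultimately show ?thesis by linarith
  qed
  show ?thesis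
  proof (cases "K = {}")
    case True
    then show ?thesis
      using outside by (intro eventually_at_rightI[of 0 1]) auto
  next
    case False
    obtain y where y: "y \<in> K" and min: "\<And>x. x \<in> K \<Longrightarrow> \<delta> y \<le> \<delta> x"
      using continuous_attains_inf[OF \<open>compact K\<close> False continuous_on_subset[OF \<delta>]]
      by (auto simp: K_def)
    have "0 < \<delta> y"
      using y nonneg[of y] zero[of y] e by (force simp: K_def)
    define b where "b = \<delta> y / (\<bar>Gm - M - e\<bar> + 1)"
    have "0 < b"
      using \<open>0 < \<delta> y\<close> by (simp add: b_def add_nonneg_pos)
    have inside: "g x - \<delta> x / t < M + e" if x: "x \<in> K" and t: "0 < t" "t < b" for x t
    proof -
      have "\<bar>Gm - M - e\<bar> + 1 < \<delta> y / t"
        using t \<open>0 < \<delta> y\<close> by (simp add: b_def field_simps)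
      also have "\<dots> \<le> \<delta> x / t"
        using min[OF x] t by (simp add: divide_right_mono)
      finally show ?thesis
        using Gm[of x] x by (auto simp: K_def)
    qed
    show ?thesis
      using outside inside by (intro eventually_at_rightI[OF _ \<open>0 < b\<close>]) auto
  qed
qed

section \<open>Proximal maps of Lipschitz gauges\<close>

lemma prox_eqI:
  fixes \<theta> :: "'a::real_inner \<Rightarrow> real"
  assumes "Z - G \<in> subdiff \<theta> G"
  shows "prox \<theta> Z = G"
proof -
  have strict: "\<theta> G + (norm (G - Z))\<^sup>2 / 2 + (norm (Y - G))\<^sup>2 / 2 \<le> \<theta> Y + (norm (Y - Z))\<^sup>2 / 2"
    for Y
  proof -
    have "\<theta> G + (Z - G) \<bullet> (Y - G) \<le> \<theta> Y"
      using assms by (simp add: subdiff_def)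
    moreover have "(norm (Y - Z))\<^sup>2 = (norm (Y - G))\<^sup>2 - 2 * ((Z - G) \<bullet> (Y - G)) + (norm (G - Z))\<^sup>2"
      using power2_norm_add_scaleR[of "Y - G" 1 "G - Z"]
      by (simp add: inner_commute inner_diff_right algebra_simps)
    ultimately show ?thesis by linarith
  qed
  show ?thesis
    unfolding prox_def
  proof (rule the_equality)
    show "\<forall>Y. \<theta> G + (norm (G - Z))\<^sup>2 / 2 \<le> \<theta> Y + (norm (Y - Z))\<^sup>2 / 2"
    proof
      fix Y
      show "\<theta> G + (norm (G - Z))\<^sup>2 / 2 \<le> \<theta> Y + (norm (Y - Z))\<^sup>2 / 2"
        using strict[of Y] zero_le_power2[of "norm (Y - G)"] by linarith
    qed
  next
    fix G'
    assume "\<forall>Y. \<theta> G' + (norm (G' - Z))\<^sup>2 / 2 \<le> \<theta> Y + (norm (Y - Z))\<^sup>2 / 2"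
    then have "\<theta> G' + (norm (G' - Z))\<^sup>2 / 2 \<le> \<theta> G + (norm (G - Z))\<^sup>2 / 2"
      by blast
    then have "(norm (G' - G))\<^sup>2 \<le> 0"
      using strict[of G'] by linarith
    then show "G' = G" by simp
  qed
qed

lemma prox_minimizer_in_subdiff:
  fixes \<theta> :: "'a::real_inner \<Rightarrow> real"
  assumes cvx: "convex_on UNIV \<theta>"
    and min: "\<And>Y. \<theta> G + (norm (G - Z))\<^sup>2 / 2 \<le> \<theta> Y + (norm (Y - Z))\<^sup>2 / 2"
  shows "Z - G \<in> subdiff \<theta> G"
  unfolding subdiff_def
proof (intro CollectI allI)
  fix Y
  define d where "d = Y - G"
  define c where "c = \<theta> Y - \<theta> G - (Z - G) \<bullet> d"
  have "- (s / 2 * (norm d)\<^sup>2) \<le> c" if s: "0 < s" "s < 1" for s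
  proof -
    have "(1 - s) *\<^sub>R G + s *\<^sub>R Y = G + s *\<^sub>R d"
      by (simp add: d_def algebra_simps)
    then have cv: "\<theta> (G + s *\<^sub>R d) \<le> (1 - s) * \<theta> G + s * \<theta> Y"
      using convex_onD[OF cvx, of s G Y] s by simp
    have sq: "(norm (G + s *\<^sub>R d - Z))\<^sup>2 = (norm (G - Z))\<^sup>2 - 2 * (s * ((Z - G) \<bullet> d)) + s\<^sup>2 * (norm d)\<^sup>2"
      using power2_norm_add_scaleR[of "G - Z" s d] by (simp add: inner_diff_left algebra_simps)
    have "s * c = s * \<theta> Y - s * \<theta> G - s * ((Z - G) \<bullet> d)"
      by (simp add: c_def algebra_simps)
    then have "0 \<le> s * (c + s / 2 * (norm d)\<^sup>2)"
      using min[of "G + s *\<^sub>R d"] cv sq by (simp add: algebra_simps power2_eq_square)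
    then show ?thesis
      using s by (simp add: zero_le_mult_iff)
  qed
  then have "\<forall>\<^sub>F s in at_right 0. - (s / 2 * (norm d)\<^sup>2) \<le> c"
    by (intro eventually_at_rightI[of 0 1]) auto
  moreover have "((\<lambda>s. - (s / 2 * (norm d)\<^sup>2)) \<longlongrightarrow> - (0 / 2 * (norm d)\<^sup>2)) (at_right 0)"
    by (intro tendsto_intros) auto
  ultimately have "0 \<le> c"
    by (auto intro: tendsto_upperbound)
  then show "\<theta> G + (Z - G) \<bullet> (Y - G) \<le> \<theta> Y"
    by (simp add: c_def d_def)
qed

lemma prox_in_subdiff:
  fixes \<theta> :: "'a::euclidean_space \<Rightarrow> real"
  assumes cvx: "convex_on UNIV \<theta>" and cont: "continuous_on UNIV \<theta>" and nonneg: "\<And>x. 0 \<le> \<theta> x"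
  shows "Z - prox \<theta> Z \<in> subdiff \<theta> (prox \<theta> Z)"
proof -
  define F where "F X = \<theta> X + (norm (X - Z))\<^sup>2 / 2" for X
  define r where "r = \<theta> Z + 1"
  have r: "0 \<le> r"
    using nonneg[of Z] by (simp add: r_def)
  have "continuous_on (cball Z r) F"
    unfolding F_def by (intro continuous_intros continuous_on_subset[OF cont]) auto
  then obtain G where "G \<in> cball Z r" and G: "\<And>Y. Y \<in> cball Z r \<Longrightarrow> F G \<le> F Y"
    using continuous_attains_inf[OF compact_cball, of Z r F] r by fastforce
  have "F G \<le> F Y" for Y
  proof (cases "Y \<in> cball Z r")
    case False
    then have "r < norm (Y - Z)"
      by (simp add: dist_norm norm_minus_commute)
    then have "r\<^sup>2 < (norm (Y - Z))\<^sup>2"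
      using r by (simp add: power_strict_mono)
    moreover have "2 * \<theta> Z < r\<^sup>2"
      using nonneg[of Z] by (simp add: r_def power2_eq_square algebra_simps add_pos_nonneg)
    moreover have "F G \<le> F Z"
      using G r by simp
    ultimately show ?thesis
      using nonneg[of Y] by (simp add: F_def)
  qed (rule G)
  then have "Z - G \<in> subdiff \<theta> G"
    unfolding F_def by (intro prox_minimizer_in_subdiff cvx)
  with prox_eqI[OF this] show ?thesis by simp
qed

lemma subdiff_pos_homogeneous_iff:
  fixes \<theta> :: "'a::real_inner \<Rightarrow> real"
  assumes hom: "\<And>c x. 0 \<le> c \<Longrightarrow> \<theta> (c *\<^sub>R x) = c * \<theta> x"
  shows "W \<in> subdiff \<theta> P \<longleftrightarrow> W \<bullet> P = \<theta> P \<and> (\<forall>X. W \<bullet> X \<le> \<theta> X)"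
proof
  assume "W \<in> subdiff \<theta> P"
  then have sub: "\<theta> P + W \<bullet> (X - P) \<le> \<theta> X" for X
    by (simp add: subdiff_def)
  have "\<theta> 0 = 0"
    using hom[of 0 0] by simp
  then have "\<theta> P \<le> W \<bullet> P"
    using sub[of 0] by simp
  moreover have "W \<bullet> P \<le> \<theta> P"
    using sub[of "2 *\<^sub>R P"] hom[of 2 P] by (simp add: inner_diff_right)
  ultimately have "W \<bullet> P = \<theta> P" by simp
  then show "W \<bullet> P = \<theta> P \<and> (\<forall>X. W \<bullet> X \<le> \<theta> X)"
    using sub by (simp add: inner_diff_right)
next
  assume "W \<bullet> P = \<theta> P \<and> (\<forall>X. W \<bullet> X \<le> \<theta> X)"
  then show "W \<in> subdiff \<theta> P"
    by (simp add: subdiff_def inner_diff_right)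
qed

definition second_dir_differentiable :: "('a::real_normed_vector \<Rightarrow> real) \<Rightarrow> 'a \<Rightarrow> 'a \<Rightarrow> bool"
  where "second_dir_differentiable \<theta> P H \<longleftrightarrow>
    (\<forall>Z. ((\<lambda>t. (\<theta> (P + t *\<^sub>R H + (t\<^sup>2 / 2) *\<^sub>R Z) - \<theta> P - t * dir_deriv \<theta> P H) / (t\<^sup>2 / 2))
          \<longlongrightarrow> second_dir_deriv \<theta> P H Z) (at_right 0))"

definition second_order_regular :: "('a::real_normed_vector \<Rightarrow> real) \<Rightarrow> 'a \<Rightarrow> 'a \<Rightarrow> bool"
  where "second_order_regular \<theta> P H \<longleftrightarrow>
    (\<forall>h. (h \<longlongrightarrow> H) (at_right 0) \<longrightarrow> (\<forall>e>0. \<forall>\<^sub>F t in at_right 0.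
      second_dir_deriv \<theta> P H ((2 / t) *\<^sub>R (h t - H)) - e
        \<le> (\<theta> (P + t *\<^sub>R h t) - \<theta> P - t * dir_deriv \<theta> P H) / (t\<^sup>2 / 2)))"

lemma psi_star_eq_uminus_Inf:
  assumes "bdd_below (range (\<lambda>Z. second_dir_deriv \<theta> P H Z - W \<bullet> Z))"
  shows "psi_star \<theta> P H W = - ereal (Inf (range (\<lambda>Z. second_dir_deriv \<theta> P H Z - W \<bullet> Z)))"
proof -
  have "psi_star \<theta> P H W = (SUP Z. - ereal (second_dir_deriv \<theta> P H Z - W \<bullet> Z))"
    unfolding psi_star_def by simp
  also have "\<dots> = - (INF Z. ereal (second_dir_deriv \<theta> P H Z - W \<bullet> Z))"
    by (rule ereal_SUP_uminus_eq)
  also have "(INF Z. ereal (second_dir_deriv \<theta> P H Z - W \<bullet> Z))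
      = ereal (Inf (range (\<lambda>Z. second_dir_deriv \<theta> P H Z - W \<bullet> Z)))"
    using ereal_Inf'[OF assms] by (simp add: image_comp)
  finally show ?thesis .
qed

locale lipschitz_gauge =
  fixes \<theta> :: "'a::euclidean_space \<Rightarrow> real" and L :: real
  assumes convex: "convex_on UNIV \<theta>"
    and pos_homogeneous: "\<And>c x. 0 \<le> c \<Longrightarrow> \<theta> (c *\<^sub>R x) = c * \<theta> x"
    and nonneg: "\<And>x. 0 \<le> \<theta> x"
    and lipschitz: "L-lipschitz_on UNIV \<theta>"
begin

lemma subdiff_iff: "W \<in> subdiff \<theta> P \<longleftrightarrow> W \<bullet> P = \<theta> P \<and> (\<forall>X. W \<bullet> X \<le> \<theta> X)"
  by (rule subdiff_pos_homogeneous_iff[OF pos_homogeneous])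

lemma abs_diff_le: "\<bar>\<theta> X - \<theta> Y\<bar> \<le> L * norm (X - Y)"
  using lipschitz_onD[OF lipschitz, of X Y] by (simp add: dist_norm dist_real_def)

lemma prox_path:
  assumes W: "W \<in> subdiff \<theta> P" and d: "has_dir_deriv (prox \<theta>) (P + W) V H"
  obtains h where "(h \<longlongrightarrow> H) (at_right 0)"
    and "\<And>t. 0 < t \<Longrightarrow> W + t *\<^sub>R (V - h t) \<in> subdiff \<theta> (P + t *\<^sub>R h t)"
proof -
  define h where "h = (\<lambda>t. (prox \<theta> (P + W + t *\<^sub>R V) - P) /\<^sub>R t)"
  have "prox \<theta> (P + W) = P"
    by (rule prox_eqI) (simp add: W)
  then have lim: "(h \<longlongrightarrow> H) (at_right 0)"
    using d by (simp add: has_dir_deriv_def h_def)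
  have sub: "W + t *\<^sub>R (V - h t) \<in> subdiff \<theta> (P + t *\<^sub>R h t)" if "0 < t" for t
  proof -
    have eq: "prox \<theta> (P + W + t *\<^sub>R V) = P + t *\<^sub>R h t"
      using that by (simp add: h_def)
    have "P + W + t *\<^sub>R V - prox \<theta> (P + W + t *\<^sub>R V) \<in> subdiff \<theta> (prox \<theta> (P + W + t *\<^sub>R V))"
      by (intro prox_in_subdiff convex nonneg lipschitz_on_continuous_on[OF lipschitz])
    then show ?thesis
      unfolding eq by (simp add: algebra_simps)
  qed
  show ?thesis
    by (rule that[OF lim sub])
qed

lemma path_quotient_tendsto:
  assumes W: "W \<in> subdiff \<theta> P" and h: "(h \<longlongrightarrow> H) (at_right 0)"
    and sub: "\<And>t. 0 < t \<Longrightarrow> W + t *\<^sub>R (V - h t) \<in> subdiff \<theta> (P + t *\<^sub>R h t)"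
  shows "((\<lambda>t. (\<theta> (P + t *\<^sub>R h t) - \<theta> P) / t) \<longlongrightarrow> W \<bullet> H) (at_right 0)"
proof (rule tendsto_sandwich)
  show "\<forall>\<^sub>F t in at_right 0. W \<bullet> h t \<le> (\<theta> (P + t *\<^sub>R h t) - \<theta> P) / t"
    using eventually_at_right_less[of 0]
  proof eventually_elim
    case (elim t)
    have "\<theta> P + W \<bullet> (t *\<^sub>R h t) \<le> \<theta> (P + t *\<^sub>R h t)"
      using W by (auto simp: subdiff_def dest: spec[of _ "P + t *\<^sub>R h t"])
    then show ?case
      using elim by (simp add: pos_le_divide_eq mult.commute)
  qed
  show "\<forall>\<^sub>F t in at_right 0. (\<theta> (P + t *\<^sub>R h t) - \<theta> P) / t \<le> W \<bullet> h t + t * ((V - h t) \<bullet> h t)"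
    using eventually_at_right_less[of 0]
  proof eventually_elim
    case (elim t)
    have "\<theta> (P + t *\<^sub>R h t) + (W + t *\<^sub>R (V - h t)) \<bullet> (P - (P + t *\<^sub>R h t)) \<le> \<theta> P"
      using sub[OF elim] by (auto simp: subdiff_def dest: spec[of _ P])
    then have "\<theta> (P + t *\<^sub>R h t) - \<theta> P \<le> t * (W \<bullet> h t + t * ((V - h t) \<bullet> h t))"
      by (simp add: inner_add_left algebra_simps)
    then show ?case
      using elim by (simp add: pos_divide_le_eq mult.commute)
  qed
  show "((\<lambda>t. W \<bullet> h t) \<longlongrightarrow> W \<bullet> H) (at_right 0)"
    by (intro tendsto_intros h)
  have "((\<lambda>t. W \<bullet> h t + t * ((V - h t) \<bullet> h t)) \<longlongrightarrow> W \<bullet> H + 0 * ((V - H) \<bullet> H)) (at_right 0)"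
    by (intro tendsto_intros h)
  then show "((\<lambda>t. W \<bullet> h t + t * ((V - h t) \<bullet> h t)) \<longlongrightarrow> W \<bullet> H) (at_right 0)"
    by simp
qed

lemma quotient_diff_tendsto_0:
  assumes h: "(h \<longlongrightarrow> H) (at_right 0)"
  shows "((\<lambda>t. (\<theta> (P + t *\<^sub>R h t) - \<theta> (P + t *\<^sub>R H)) / t) \<longlongrightarrow> 0) (at_right 0)"
proof (rule Lim_null_comparison)
  show "\<forall>\<^sub>F t in at_right 0. norm ((\<theta> (P + t *\<^sub>R h t) - \<theta> (P + t *\<^sub>R H)) / t) \<le> L * norm (h t - H)"
    using eventually_at_right_less[of 0]
  proof eventually_elim
    case (elim t)
    have "\<bar>\<theta> (P + t *\<^sub>R h t) - \<theta> (P + t *\<^sub>R H)\<bar> \<le> L * (t * norm (h t - H))"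
      using abs_diff_le[of "P + t *\<^sub>R h t" "P + t *\<^sub>R H"] elim
      by (simp add: scaleR_diff_right[symmetric])
    then have "\<bar>\<theta> (P + t *\<^sub>R h t) - \<theta> (P + t *\<^sub>R H)\<bar> / t \<le> L * norm (h t - H)"
      using elim by (simp add: pos_divide_le_eq ac_simps)
    then show ?case
      using elim by (simp add: abs_div)
  qed
  have "((\<lambda>t. L * norm (h t - H)) \<longlongrightarrow> L * norm (H - H)) (at_right 0)"
    by (intro tendsto_intros h)
  then show "((\<lambda>t. L * norm (h t - H)) \<longlongrightarrow> 0) (at_right 0)"
    by simp
qed

lemma dir_deriv_eq_inner:
  assumes W: "W \<in> subdiff \<theta> P" and h: "(h \<longlongrightarrow> H) (at_right 0)"
    and sub: "\<And>t. 0 < t \<Longrightarrow> W + t *\<^sub>R (V - h t) \<in> subdiff \<theta> (P + t *\<^sub>R h t)"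
  shows "dir_deriv \<theta> P H = W \<bullet> H"
proof -
  have "((\<lambda>t. (\<theta> (P + t *\<^sub>R h t) - \<theta> P) / t - (\<theta> (P + t *\<^sub>R h t) - \<theta> (P + t *\<^sub>R H)) / t)
      \<longlongrightarrow> W \<bullet> H - 0) (at_right 0)"
    by (intro tendsto_intros path_quotient_tendsto[OF W h sub] quotient_diff_tendsto_0[OF h])
  then have "((\<lambda>t. (\<theta> (P + t *\<^sub>R H) - \<theta> P) / t) \<longlongrightarrow> W \<bullet> H) (at_right 0)"
    by (simp add: diff_divide_distrib)
  then show ?thesis
    unfolding dir_deriv_def by (rule tendsto_Lim[OF trivial_limit_at_right_real])
qed

lemma second_dir_deriv_ge_inner:
  assumes W: "W \<in> subdiff \<theta> P" and dd: "dir_deriv \<theta> P H = W \<bullet> H"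
    and sdd: "second_dir_differentiable \<theta> P H"
  shows "W \<bullet> Z \<le> second_dir_deriv \<theta> P H Z"
proof (rule tendsto_lowerbound)
  show "((\<lambda>t. (\<theta> (P + t *\<^sub>R H + (t\<^sup>2 / 2) *\<^sub>R Z) - \<theta> P - t * dir_deriv \<theta> P H) / (t\<^sup>2 / 2))
      \<longlongrightarrow> second_dir_deriv \<theta> P H Z) (at_right 0)"
    using sdd by (simp add: second_dir_differentiable_def)
  show "\<forall>\<^sub>F t in at_right 0.
      W \<bullet> Z \<le> (\<theta> (P + t *\<^sub>R H + (t\<^sup>2 / 2) *\<^sub>R Z) - \<theta> P - t * dir_deriv \<theta> P H) / (t\<^sup>2 / 2)"
    using eventually_at_right_less[of 0]
  proof eventually_elim
    case (elim t)
    have "W \<bullet> (P + t *\<^sub>R H + (t\<^sup>2 / 2) *\<^sub>R Z) \<le> \<theta> (P + t *\<^sub>R H + (t\<^sup>2 / 2) *\<^sub>R Z)"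
      and "W \<bullet> P = \<theta> P"
      using W by (auto simp: subdiff_iff)
    then have "(t\<^sup>2 / 2) * (W \<bullet> Z) \<le> \<theta> (P + t *\<^sub>R H + (t\<^sup>2 / 2) *\<^sub>R Z) - \<theta> P - t * dir_deriv \<theta> P H"
      by (simp add: dd inner_add_right)
    then show ?case
      using elim by (simp add: pos_le_divide_eq mult.commute)
  qed
qed simp

lemma second_order_scaling:
  assumes W: "W \<in> subdiff \<theta> P" and dd: "dir_deriv \<theta> P H = W \<bullet> H"
    and sdd: "second_dir_differentiable \<theta> P H" and reg: "second_order_regular \<theta> P H"
    and h: "(h \<longlongrightarrow> H) (at_right 0)"
    and sub: "\<And>t. 0 < t \<Longrightarrow> W + t *\<^sub>R (H + D - h t) \<in> subdiff \<theta> (P + t *\<^sub>R h t)"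
    and l: "0 < l"
  shows "Inf (range (\<lambda>Z. second_dir_deriv \<theta> P H Z - W \<bullet> Z)) + 2 * (l - 1) * (D \<bullet> H)
    \<le> l\<^sup>2 * (second_dir_deriv \<theta> P H Z - W \<bullet> Z)"
proof -
  define \<phi> where "\<phi> = (\<lambda>Z. second_dir_deriv \<theta> P H Z - W \<bullet> Z)"
  define q where "q = (\<lambda>s. (\<theta> (P + s *\<^sub>R H + (s\<^sup>2 / 2) *\<^sub>R Z) - \<theta> P - s * (W \<bullet> H)) / (s\<^sup>2 / 2))"
  define r where "r t = (\<theta> (P + t *\<^sub>R h t) - \<theta> P - t * (W \<bullet> H)) / (t\<^sup>2 / 2)" for t
  define Zt where "Zt t = (2 / t) *\<^sub>R (h t - H)" for t
  define U where "U t = l *\<^sub>R H - h t + (l\<^sup>2 * t / 2) *\<^sub>R Z" for t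
  have Inf_le: "Inf (range \<phi>) \<le> \<phi> Z'" for Z'
    using second_dir_deriv_ge_inner[OF W dd sdd]
    by (intro cInf_lower bdd_belowI2[of _ 0]) (auto simp: \<phi>_def)
  have "(q \<longlongrightarrow> second_dir_deriv \<theta> P H Z) (at_right 0)"
    using sdd dd by (simp add: second_dir_differentiable_def q_def)
  then have q_lim: "((\<lambda>t. q (l * t)) \<longlongrightarrow> second_dir_deriv \<theta> P H Z) (at_right 0)"
    by (rule filterlim_compose[OF _ filterlim_scale_at_right_0[OF l]])
  have key: "r t - W \<bullet> Zt t + 2 * ((H + D - h t) \<bullet> U t) \<le> l\<^sup>2 * (q (l * t) - W \<bullet> Z)"
    if t: "0 < t" for t
  proof -
    define X where "X = P + (l * t) *\<^sub>R H + ((l * t)\<^sup>2 / 2) *\<^sub>R Z"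
    define G where "G = P + t *\<^sub>R h t"
    have XG: "X - G = t *\<^sub>R U t"
      by (simp add: X_def G_def U_def algebra_simps power2_eq_square)
    have "\<theta> G + (W + t *\<^sub>R (H + D - h t)) \<bullet> (X - G) \<le> \<theta> X"
      using sub[OF t] unfolding subdiff_def G_def by blast
    moreover have "(W + t *\<^sub>R (H + D - h t)) \<bullet> (t *\<^sub>R U t)
        = t * (W \<bullet> U t) + t\<^sup>2 * ((H + D - h t) \<bullet> U t)"
      by (simp add: inner_add_left power2_eq_square distrib_left)
    ultimately have sub': "\<theta> G + t * (W \<bullet> U t) + t\<^sup>2 * ((H + D - h t) \<bullet> U t) \<le> \<theta> X"
      unfolding XG by linarith
    have e1: "(t\<^sup>2 / 2) * r t = \<theta> G - \<theta> P - t * (W \<bullet> H)"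
      using t by (simp add: r_def G_def)
    have e2: "(t\<^sup>2 / 2) * (W \<bullet> Zt t) = t * (W \<bullet> h t) - t * (W \<bullet> H)"
      using t by (simp add: Zt_def inner_diff_right power2_eq_square algebra_simps)
    have e3: "(t\<^sup>2 / 2) * (l\<^sup>2 * q (l * t)) = \<theta> X - \<theta> P - (l * t) * (W \<bullet> H)"
      using t l by (simp add: q_def X_def power_mult_distrib)
    have e4: "t * (W \<bullet> U t) = l * t * (W \<bullet> H) - t * (W \<bullet> h t) + (t\<^sup>2 / 2) * (l\<^sup>2 * (W \<bullet> Z))"
      by (simp add: U_def inner_add_right inner_diff_right power2_eq_square algebra_simps)
    have "(t\<^sup>2 / 2) * (r t - W \<bullet> Zt t + 2 * ((H + D - h t) \<bullet> U t))
        = (t\<^sup>2 / 2) * r t - (t\<^sup>2 / 2) * (W \<bullet> Zt t) + t\<^sup>2 * ((H + D - h t) \<bullet> U t)"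
      and "(t\<^sup>2 / 2) * (l\<^sup>2 * (q (l * t) - W \<bullet> Z))
        = (t\<^sup>2 / 2) * (l\<^sup>2 * q (l * t)) - (t\<^sup>2 / 2) * (l\<^sup>2 * (W \<bullet> Z))"
      by (simp_all add: algebra_simps)
    then have "(t\<^sup>2 / 2) * (r t - W \<bullet> Zt t + 2 * ((H + D - h t) \<bullet> U t))
        \<le> (t\<^sup>2 / 2) * (l\<^sup>2 * (q (l * t) - W \<bullet> Z))"
      using sub' e1 e2 e3 e4 by linarith
    then show ?thesis
      using t by (simp add: mult_le_cancel_left_pos)
  qed
  have bound: "Inf (range \<phi>) - e + 2 * ((H + D - h t) \<bullet> U t) \<le> l\<^sup>2 * (q (l * t) - W \<bullet> Z)"
    if "0 < t" "second_dir_deriv \<theta> P H (Zt t) - e \<le> r t" for t e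
    using key[OF that(1)] that(2) Inf_le[of "Zt t"] unfolding \<phi>_def by linarith
  have approx: "Inf (range \<phi>) - e + 2 * (l - 1) * (D \<bullet> H) \<le> l\<^sup>2 * \<phi> Z" if e: "0 < e" for e
  proof (rule tendsto_le[OF trivial_limit_at_right_real])
    show "((\<lambda>t. l\<^sup>2 * (q (l * t) - W \<bullet> Z)) \<longlongrightarrow> l\<^sup>2 * \<phi> Z) (at_right 0)"
      unfolding \<phi>_def by (intro tendsto_intros q_lim)
    have "((\<lambda>t. Inf (range \<phi>) - e + 2 * ((H + D - h t) \<bullet> U t))
        \<longlongrightarrow> Inf (range \<phi>) - e + 2 * ((H + D - H) \<bullet> (l *\<^sub>R H - H + (l\<^sup>2 * 0 / 2) *\<^sub>R Z))) (at_right 0)"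
      unfolding U_def by (intro tendsto_intros h) simp
    moreover have "(H + D - H) \<bullet> (l *\<^sub>R H - H + (l\<^sup>2 * 0 / 2) *\<^sub>R Z) = (l - 1) * (D \<bullet> H)"
      by (simp add: inner_diff_right left_diff_distrib)
    ultimately show "((\<lambda>t. Inf (range \<phi>) - e + 2 * ((H + D - h t) \<bullet> U t))
        \<longlongrightarrow> Inf (range \<phi>) - e + 2 * (l - 1) * (D \<bullet> H)) (at_right 0)"
      by (simp only: mult.assoc)
    have "\<forall>\<^sub>F t in at_right 0. second_dir_deriv \<theta> P H (Zt t) - e \<le> r t"
      using reg h e unfolding second_order_regular_def Zt_def r_def dd by blast
    with eventually_at_right_less[of 0]
    show "\<forall>\<^sub>F t in at_right 0. Inf (range \<phi>) - e + 2 * ((H + D - h t) \<bullet> U t)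
        \<le> l\<^sup>2 * (q (l * t) - W \<bullet> Z)"
      by eventually_elim (rule bound)
  qed
  have "Inf (range \<phi>) + 2 * (l - 1) * (D \<bullet> H) \<le> l\<^sup>2 * \<phi> Z"
  proof (rule field_le_epsilon)
    fix e :: real
    assume "0 < e"
    then show "Inf (range \<phi>) + 2 * (l - 1) * (D \<bullet> H) \<le> l\<^sup>2 * \<phi> Z + e"
      using approx[of e] by linarith
  qed
  then show ?thesis
    by (simp add: \<phi>_def)
qed

theorem prox_dir_deriv_characterization:
  assumes W: "W \<in> subdiff \<theta> P" and d: "has_dir_deriv (prox \<theta>) (P + W) (H + D) H"
    and sdd: "second_dir_differentiable \<theta> P H" and reg: "second_order_regular \<theta> P H"
  shows "H \<in> crit_cone \<theta> P W \<and> ereal (H \<bullet> D) = - psi_star \<theta> P H W"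
proof -
  obtain h where h: "(h \<longlongrightarrow> H) (at_right 0)"
    and sub: "\<And>t. 0 < t \<Longrightarrow> W + t *\<^sub>R (H + D - h t) \<in> subdiff \<theta> (P + t *\<^sub>R h t)"
    using prox_path[OF W d] by blast
  have dd: "dir_deriv \<theta> P H = W \<bullet> H"
    by (rule dir_deriv_eq_inner[OF W h sub])
  define \<phi> where "\<phi> Z = second_dir_deriv \<theta> P H Z - W \<bullet> Z" for Z
  have "Inf (range \<phi>) = D \<bullet> H"
  proof (rule eq_if_scaled_quadratic_bound)
    fix l :: real
    assume l: "0 < l"
    have "(Inf (range \<phi>) + 2 * (l - 1) * (D \<bullet> H)) / l\<^sup>2 \<le> Inf (range \<phi>)"
      using second_order_scaling[OF W dd sdd reg h sub l] l
      by (intro cInf_greatest) (auto simp: \<phi>_def divide_le_eq mult.commute)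
    then show "Inf (range \<phi>) + 2 * (l - 1) * (D \<bullet> H) \<le> l\<^sup>2 * Inf (range \<phi>)"
      using l by (simp add: divide_le_eq mult.commute)
  qed
  moreover have "psi_star \<theta> P H W = - ereal (Inf (range \<phi>))"
    unfolding \<phi>_def using second_dir_deriv_ge_inner[OF W dd sdd]
    by (intro psi_star_eq_uminus_Inf bdd_belowI2[of _ 0]) simp
  ultimately show ?thesis
    using dd by (simp add: crit_cone_def inner_commute)
qed

end

section \<open>The spectral norm\<close>

lemma scaleR_matrix_vector_mult: "(c *\<^sub>R A) *v x = c *\<^sub>R (A *v x)"
  for A :: "real^'n^'m"
  by (metis matrix_scaleR_vector_ac matrix_vector_mult_scaleR)

lemmas continuous_on_matrix_vector_mult =
  bounded_linear.continuous_on[OF matrix_vector_mul_bounded_linear]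

lemma norm_matrix_vector_le_spec_norm: "norm (A *v x) \<le> spec_norm A * norm x"
  unfolding spec_norm_def by (rule onorm[OF matrix_vector_mul_bounded_linear])

lemma spec_norm_nonneg: "0 \<le> spec_norm A"
  unfolding spec_norm_def by (rule onorm_pos_le[OF matrix_vector_mul_bounded_linear])

lemma spec_norm_triangle: "spec_norm (A + B) \<le> spec_norm A + spec_norm B"
  unfolding spec_norm_def matrix_vector_mult_add_rdistrib
  by (rule onorm_triangle[OF matrix_vector_mul_bounded_linear matrix_vector_mul_bounded_linear])

lemma spec_norm_scaleR: "spec_norm (c *\<^sub>R A) = \<bar>c\<bar> * spec_norm A"
  unfolding spec_norm_def scaleR_matrix_vector_mult
  by (rule onorm_scaleR[OF matrix_vector_mul_bounded_linear])

lemma spec_norm_zero: "spec_norm 0 = 0"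
  using spec_norm_scaleR[of 0 0] by simp

lemma power2_norm_matrix_vector_le: "(norm (A *v x))\<^sup>2 \<le> (spec_norm A)\<^sup>2 * (norm x)\<^sup>2"
proof -
  have "(norm (A *v x))\<^sup>2 \<le> (spec_norm A * norm x)\<^sup>2"
    by (rule power_mono[OF norm_matrix_vector_le_spec_norm]) simp
  then show ?thesis
    by (simp add: power_mult_distrib)
qed

lemma norm_matrix_vector_le_mult:
  assumes "spec_norm A \<le> B" "norm x \<le> R"
  shows "norm (A *v x) \<le> B * R"
proof -
  have "norm (A *v x) \<le> spec_norm A * norm x"
    by (rule norm_matrix_vector_le_spec_norm)
  also have "\<dots> \<le> B * R"
    using assms spec_norm_nonneg[of A] by (intro mult_mono) auto
  finally show ?thesis .
qed

lemma abs_inner_matrix_vector_le: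
  "\<bar>(A *v x) \<bullet> (B *v y)\<bar> \<le> spec_norm A * norm x * (spec_norm B * norm y)"
proof -
  have "\<bar>(A *v x) \<bullet> (B *v y)\<bar> \<le> norm (A *v x) * norm (B *v y)"
    by (rule Cauchy_Schwarz_ineq2)
  also have "\<dots> \<le> spec_norm A * norm x * (spec_norm B * norm y)"
    by (intro mult_mono norm_matrix_vector_le_spec_norm) (simp_all add: spec_norm_nonneg)
  finally show ?thesis .
qed

lemma spec_norm_pos: "A \<noteq> 0 \<Longrightarrow> 0 < spec_norm A"
proof -
  assume "A \<noteq> 0"
  then obtain i j where "A $ i $ j \<noteq> 0"
    by (auto simp: vec_eq_iff)
  moreover have "\<bar>A $ i $ j\<bar> \<le> spec_norm A"
    unfolding spec_norm_def by (rule matrix_component_le_onorm)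
  ultimately show ?thesis by linarith
qed

lemma spec_norm_le_norm: "spec_norm A \<le> real CARD('m) * real CARD('n) * norm A"
  for A :: "real^'n^'m"
proof -
  have "\<bar>A $ i $ j\<bar> \<le> norm A" for i j
    using component_le_norm_cart[of "A $ i" j] Finite_Cartesian_Product.norm_nth_le[of A i]
    by linarith
  then show ?thesis
    unfolding spec_norm_def by (rule onorm_le_matrix_component)
qed

lemma spec_norm_lipschitz:
  "(real CARD('m) * real CARD('n))-lipschitz_on UNIV (spec_norm :: real^'n^'m \<Rightarrow> real)"
proof (rule lipschitz_onI)
  fix A B :: "real^'n^'m"
  have "spec_norm A \<le> spec_norm B + spec_norm (A - B)"
    using spec_norm_triangle[of B "A - B"] by simp
  moreover have "spec_norm B \<le> spec_norm A + spec_norm (A - B)"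
    using spec_norm_triangle[of A "B - A"] spec_norm_scaleR[of "-1" "A - B"] by simp
  ultimately show "dist (spec_norm A) (spec_norm B) \<le> real CARD('m) * real CARD('n) * dist A B"
    using spec_norm_le_norm[of "A - B"] by (simp add: dist_real_def dist_norm)
qed simp

lemma tendsto_spec_norm [tendsto_intros]:
  "(f \<longlongrightarrow> A) F \<Longrightarrow> ((\<lambda>x. spec_norm (f x)) \<longlongrightarrow> spec_norm A) F"
  using continuous_on_tendsto_compose[OF lipschitz_on_continuous_on[OF spec_norm_lipschitz]]
  by simp

lemma spec_norm_attained: "\<exists>x. norm x = 1 \<and> norm (A *v x) = spec_norm A"
  for A :: "real^'n^'m"
proof -
  obtain e :: "real^'n" where "norm e = 1"
    using vector_choose_size[of 1] by auto
  moreover have "continuous_on (sphere 0 1) (\<lambda>x::real^'n. norm (A *v x))"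
    by (intro continuous_intros continuous_on_matrix_vector_mult)
  ultimately obtain x where x: "x \<in> sphere 0 1"
    and max: "\<And>y. y \<in> sphere 0 1 \<Longrightarrow> norm (A *v y) \<le> norm (A *v x)"
    using continuous_attains_sup[OF compact_sphere, of 0 1] by fastforce
  have "spec_norm A \<le> norm (A *v x)"
    unfolding spec_norm_def
  proof (rule onorm_le)
    fix y :: "real^'n"
    show "norm (A *v y) \<le> norm (A *v x) * norm y"
    proof (cases "y = 0")
      case False
      then have "norm (A *v (y /\<^sub>R norm y)) \<le> norm (A *v x)"
        by (intro max) simp
      then have "inverse (norm y) * norm (A *v y) \<le> norm (A *v x)"
        by (simp add: matrix_vector_mult_scaleR)
      then show ?thesis
        using False by (simp add: field_simps)
    qed simp
  qed
  moreover have "norm (A *v x) \<le> spec_norm A"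
    using norm_matrix_vector_le_spec_norm[of A x] x by simp
  ultimately show ?thesis
    using x by (intro exI[of _ x]) auto
qed

interpretation spec_norm: lipschitz_gauge "spec_norm :: real^'n^'m \<Rightarrow> real"
  "real CARD('m) * real CARD('n)"
proof
  show "convex_on UNIV (spec_norm :: real^'n^'m \<Rightarrow> real)"
  proof (rule convex_onI)
    fix t :: real and A B :: "real^'n^'m"
    assume "0 < t" "t < 1"
    then show "spec_norm ((1 - t) *\<^sub>R A + t *\<^sub>R B) \<le> (1 - t) * spec_norm A + t * spec_norm B"
      using spec_norm_triangle[of "(1 - t) *\<^sub>R A" "t *\<^sub>R B"] by (simp add: spec_norm_scaleR)
  qed simp
qed (auto simp: spec_norm_scaleR spec_norm_nonneg spec_norm_lipschitz)

section \<open>The top singular subspace\<close>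

locale top_singular =
  fixes P :: "real^'n^'m"
  assumes nonzero: "P \<noteq> 0"
begin

definition "\<sigma> = spec_norm P"

definition "Vmax = {x. norm (P *v x) = \<sigma> * norm x}"

definition "Vperp = {b. \<forall>a\<in>Vmax. a \<bullet> b = 0}"

lemma sigma_pos: "0 < \<sigma>"
  unfolding \<sigma>_def by (rule spec_norm_pos[OF nonzero])

lemma norm_P_le: "norm (P *v x) \<le> \<sigma> * norm x"
  unfolding \<sigma>_def by (rule norm_matrix_vector_le_spec_norm)

lemma power2_norm_P_le: "(norm (P *v x))\<^sup>2 \<le> \<sigma>\<^sup>2 * (norm x)\<^sup>2"
proof -
  have "(norm (P *v x))\<^sup>2 \<le> (\<sigma> * norm x)\<^sup>2"
    by (rule power_mono[OF norm_P_le]) simp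
  then show ?thesis
    by (simp add: power_mult_distrib)
qed

lemma Vmax_power2_norm: "a \<in> Vmax \<Longrightarrow> (norm (P *v a))\<^sup>2 = \<sigma>\<^sup>2 * (norm a)\<^sup>2"
  by (simp add: Vmax_def power_mult_distrib)

text \<open>A vector of Vmax minimises the nonnegative quadratic form \<open>\<sigma>\<^sup>2 \<parallel>y\<parallel>\<^sup>2 - \<parallel>P y\<parallel>\<^sup>2\<close>, so the
  derivative of this form vanishes there.\<close>

lemma Vmax_inner:
  assumes x: "x \<in> Vmax"
  shows "(P *v x) \<bullet> (P *v y) = \<sigma>\<^sup>2 * (x \<bullet> y)"
proof -
  define g where "g s = \<sigma>\<^sup>2 * ((norm x)\<^sup>2 + 2 * s * (x \<bullet> y) + s\<^sup>2 * (norm y)\<^sup>2)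
    - ((norm (P *v x))\<^sup>2 + 2 * s * ((P *v x) \<bullet> (P *v y)) + s\<^sup>2 * (norm (P *v y))\<^sup>2)" for s
  have "g s = \<sigma>\<^sup>2 * (norm (x + s *\<^sub>R y))\<^sup>2 - (norm (P *v (x + s *\<^sub>R y)))\<^sup>2" for s
    by (simp add: g_def power2_norm_add_scaleR matrix_vector_right_distrib matrix_vector_mult_scaleR)
  then have "\<forall>s. \<bar>0 - s\<bar> < 1 \<longrightarrow> g 0 \<le> g s"
    using power2_norm_P_le Vmax_power2_norm[OF x] by (simp add: g_def)
  moreover have "(g has_real_derivative 2 * \<sigma>\<^sup>2 * (x \<bullet> y) - 2 * ((P *v x) \<bullet> (P *v y))) (at 0)"
    unfolding g_def by (auto intro!: derivative_eq_intros)
  ultimately have "2 * \<sigma>\<^sup>2 * (x \<bullet> y) - 2 * ((P *v x) \<bullet> (P *v y)) = 0"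
    by (intro DERIV_local_min[OF _ zero_less_one])
  then show ?thesis by simp
qed

lemma subspace_Vmax: "subspace Vmax"
proof -
  have "x \<in> Vmax" if "\<forall>y. (P *v x) \<bullet> (P *v y) = \<sigma>\<^sup>2 * (x \<bullet> y)" for x
  proof -
    have "(norm (P *v x))\<^sup>2 = (\<sigma> * norm x)\<^sup>2"
      using that by (simp add: power2_norm_eq_inner power_mult_distrib)
    then show ?thesis
      using sigma_pos by (simp add: Vmax_def power2_eq_iff_nonneg)
  qed
  then have "Vmax = {x. \<forall>y. (P *v x) \<bullet> (P *v y) = \<sigma>\<^sup>2 * (x \<bullet> y)}"
    using Vmax_inner by blast
  then show ?thesis
    by (simp add: subspace_def matrix_vector_right_distrib matrix_vector_mult_scaleR
      inner_add_left distrib_left)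
qed

lemma closed_Vmax: "closed Vmax"
  unfolding Vmax_def
  by (intro closed_Collect_eq continuous_intros continuous_on_matrix_vector_mult)

lemma subspace_Vperp: "subspace Vperp"
  by (auto simp: subspace_def Vperp_def inner_add_right)

lemma closed_Vperp: "closed Vperp"
proof -
  have "Vperp = (\<Inter>a\<in>Vmax. {b. a \<bullet> b = 0})"
    by (auto simp: Vperp_def)
  then show ?thesis
    by (simp add: closed_INT closed_hyperplane)
qed

lemma Vmax_Vperp_orthogonal:
  assumes "a \<in> Vmax" "b \<in> Vperp"
  shows "a \<bullet> b = 0" "(P *v a) \<bullet> (P *v b) = 0"
  using assms Vmax_inner[of a b] by (auto simp: Vperp_def)

lemma Vmax_Vperp_decomp:
  obtains a b where "a \<in> Vmax" "b \<in> Vperp" "x = a + b"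
proof -
  obtain a b where a: "a \<in> span Vmax" and b: "\<And>w. w \<in> span Vmax \<Longrightarrow> orthogonal b w"
    and x: "x = a + b"
    using orthogonal_subspace_decomp_exists[of Vmax x] by blast
  have span: "span Vmax = Vmax"
    using subspace_Vmax by (simp add: span_eq_iff)
  have "b \<in> Vperp"
    using b unfolding span by (auto simp: Vperp_def orthogonal_def inner_commute)
  with a x show ?thesis
    unfolding span by (intro that)
qed

lemma spectral_gap:
  obtains \<gamma> where "0 < \<gamma>" "\<And>b. b \<in> Vperp \<Longrightarrow> (norm (P *v b))\<^sup>2 \<le> (\<sigma>\<^sup>2 - \<gamma>) * (norm b)\<^sup>2"
proof -
  define K where "K = Vperp \<inter> sphere 0 1"
  have "compact K"
    unfolding K_def by (metis compact_Int_closed compact_sphere closed_Vperp Int_commute)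
  have scale: "(norm (P *v b))\<^sup>2 \<le> M * (norm b)\<^sup>2"
    if M: "\<And>u. u \<in> K \<Longrightarrow> (norm (P *v u))\<^sup>2 \<le> M" and b: "b \<in> Vperp" for b M
  proof (cases "b = 0")
    case False
    have "b /\<^sub>R norm b \<in> K"
      using False b subspace_Vperp by (auto simp: K_def subspace_def)
    moreover have "norm (P *v (b /\<^sub>R norm b)) = norm (P *v b) / norm b"
      by (simp add: matrix_vector_mult_scaleR divide_inverse_commute)
    ultimately have "(norm (P *v b))\<^sup>2 / (norm b)\<^sup>2 \<le> M"
      using M[of "b /\<^sub>R norm b"] by (simp add: power_divide)
    then show ?thesis
      using False by (simp add: divide_le_eq)
  qed simp
  show ?thesis
  proof (cases "K = {}")
    case True
    then show ?thesis
      using that[of "\<sigma>\<^sup>2"] scale[of 0] sigma_pos by auto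
  next
    case False
    have "continuous_on K (\<lambda>u. (norm (P *v u))\<^sup>2)"
      by (intro continuous_intros continuous_on_matrix_vector_mult)
    then obtain u where u: "u \<in> K" and max: "\<And>v. v \<in> K \<Longrightarrow> (norm (P *v v))\<^sup>2 \<le> (norm (P *v u))\<^sup>2"
      using continuous_attains_sup[OF \<open>compact K\<close> False] by blast
    have u1: "norm u = 1" and "u \<in> Vperp"
      using u by (auto simp: K_def)
    then have "u \<notin> Vmax"
      using Vmax_Vperp_orthogonal(1)[of u u] by auto
    then have "norm (P *v u) < \<sigma>"
      using norm_P_le[of u] u1 by (simp add: Vmax_def)
    then have "(norm (P *v u))\<^sup>2 < \<sigma>\<^sup>2"
      by (simp add: power_strict_mono)
    then show ?thesis
      using that[of "\<sigma>\<^sup>2 - (norm (P *v u))\<^sup>2"] scale[OF max] by auto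
  qed
qed

lemma Vmax_unit: obtains a where "a \<in> Vmax" "norm a = 1"
  using spec_norm_attained[of P] that by (auto simp: Vmax_def \<sigma>_def)

end

section \<open>Second-order expansion of the spectral norm\<close>

locale top_singular_direction = top_singular P for P :: "real^'n^'m" +
  fixes H :: "real^'n^'m"
begin

definition "\<mu> = Sup ((\<lambda>a. 2 * ((P *v a) \<bullet> (H *v a))) ` (Vmax \<inter> sphere 0 1))"

definition "Amax = {a \<in> Vmax \<inter> sphere 0 1. 2 * ((P *v a) \<bullet> (H *v a)) = \<mu>}"

text \<open>For \<open>a \<in> Amax\<close> and \<open>b \<in> Vperp\<close> the \<open>t\<^sup>2\<close>-coefficient of
  \<open>\<parallel>(P + t H + t\<^sup>2/2 Z)(a + t b)\<parallel>\<^sup>2 / \<parallel>a + t b\<parallel>\<^sup>2\<close>.\<close>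

definition coeff2 :: "real^'n^'m \<Rightarrow> real^'n \<Rightarrow> real^'n \<Rightarrow> real"
  where "coeff2 Z a b = (norm (H *v a))\<^sup>2 + 2 * ((P *v a) \<bullet> (H *v b) + (P *v b) \<bullet> (H *v a))
  - (\<sigma>\<^sup>2 * (norm b)\<^sup>2 - (norm (P *v b))\<^sup>2) + (P *v a) \<bullet> (Z *v a)"

definition \<nu> :: "real^'n^'m \<Rightarrow> real"
  where "\<nu> Z = (SUP (a, b) \<in> Amax \<times> Vperp. coeff2 Z a b)"

lemma mu_attained: "\<exists>a\<in>Amax. \<forall>x\<in>Vmax \<inter> sphere 0 1. 2 * ((P *v x) \<bullet> (H *v x)) \<le> \<mu>"
proof -
  have "compact (Vmax \<inter> sphere 0 1)"
    using compact_Int_closed[OF compact_sphere closed_Vmax] by (simp add: Int_commute)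
  moreover obtain a0 where "a0 \<in> Vmax" "norm a0 = 1"
    by (rule Vmax_unit)
  then have "Vmax \<inter> sphere 0 1 \<noteq> {}"
    by auto
  moreover have "continuous_on (Vmax \<inter> sphere 0 1) (\<lambda>a. 2 * ((P *v a) \<bullet> (H *v a)))"
    by (intro continuous_intros continuous_on_matrix_vector_mult)
  ultimately obtain a where a: "a \<in> Vmax \<inter> sphere 0 1"
    and max: "\<forall>x\<in>Vmax \<inter> sphere 0 1. 2 * ((P *v x) \<bullet> (H *v x)) \<le> 2 * ((P *v a) \<bullet> (H *v a))"
    by (blast dest: continuous_attains_sup)
  then have "\<mu> = 2 * ((P *v a) \<bullet> (H *v a))"
    unfolding \<mu>_def by (intro cSup_eq_maximum) auto
  with a max show ?thesis
    unfolding Amax_def by (intro bexI[of _ a]) auto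
qed

lemma Amax_nonempty: "Amax \<noteq> {}"
  using mu_attained by blast

lemma Amax_D:
  assumes "a \<in> Amax"
  shows "a \<in> Vmax" "norm a = 1" "2 * ((P *v a) \<bullet> (H *v a)) = \<mu>"
  using assms by (auto simp: Amax_def)

lemma mu_ge:
  assumes a: "a \<in> Vmax"
  shows "2 * ((P *v a) \<bullet> (H *v a)) \<le> \<mu> * (norm a)\<^sup>2"
proof (cases "a = 0")
  case False
  have "a /\<^sub>R norm a \<in> Vmax \<inter> sphere 0 1"
    using False a subspace_Vmax by (auto simp: subspace_def)
  then have "2 * ((P *v (a /\<^sub>R norm a)) \<bullet> (H *v (a /\<^sub>R norm a))) \<le> \<mu>"
    using mu_attained by blast
  then have "2 * ((P *v a) \<bullet> (H *v a)) / (norm a)\<^sup>2 \<le> \<mu>"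
    by (simp add: matrix_vector_mult_scaleR power2_eq_square divide_inverse_commute ac_simps)
  then show ?thesis
    using False by (simp add: divide_le_eq)
qed simp

lemma abs_mu_le: "\<bar>\<mu>\<bar> \<le> 2 * \<sigma> * spec_norm H"
proof -
  obtain a where "a \<in> Amax"
    using Amax_nonempty by blast
  then show ?thesis
    using abs_inner_matrix_vector_le[of P a H a] Amax_D[of a] by (simp add: \<sigma>_def)
qed

lemma coeff2_zero: "coeff2 Z a 0 = (norm (H *v a))\<^sup>2 + (P *v a) \<bullet> (Z *v a)"
  by (simp add: coeff2_def)

text \<open>The spectral gap makes \<open>coeff2\<close> a concave quadratic in the \<open>Vperp\<close>-component.\<close>

lemma coeff2_le_coeff2_zero:
  obtains \<gamma> where "0 < \<gamma>"
    "\<And>Z a b. norm a \<le> 1 \<Longrightarrow> b \<in> Vperp \<Longrightarrow>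
      coeff2 Z a b \<le> coeff2 Z a 0 + 4 * \<sigma> * spec_norm H * norm b - \<gamma> * (norm b)\<^sup>2"
proof -
  obtain \<gamma> where \<gamma>: "0 < \<gamma>" "\<And>b. b \<in> Vperp \<Longrightarrow> (norm (P *v b))\<^sup>2 \<le> (\<sigma>\<^sup>2 - \<gamma>) * (norm b)\<^sup>2"
    using spectral_gap by blast
  have "coeff2 Z a b \<le> coeff2 Z a 0 + 4 * \<sigma> * spec_norm H * norm b - \<gamma> * (norm b)\<^sup>2"
    if a: "norm a \<le> 1" and b: "b \<in> Vperp" for Z a b
  proof -
    have eq: "coeff2 Z a b = coeff2 Z a 0 + 2 * ((P *v a) \<bullet> (H *v b) + (P *v b) \<bullet> (H *v a))
        - (\<sigma>\<^sup>2 * (norm b)\<^sup>2 - (norm (P *v b))\<^sup>2)"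
      by (simp add: coeff2_def)
    define k where "k = \<sigma> * spec_norm H * norm b"
    have "\<sigma> * norm a * (spec_norm H * norm b) \<le> k"
      using mult_left_mono[OF a, of "\<sigma> * spec_norm H * norm b"] sigma_pos spec_norm_nonneg[of H]
      by (simp add: k_def ac_simps)
    then have x1: "(P *v a) \<bullet> (H *v b) \<le> k" and x2: "(P *v b) \<bullet> (H *v a) \<le> k"
      using abs_inner_matrix_vector_le[of P a H b] abs_inner_matrix_vector_le[of P b H a]
      by (auto simp: \<sigma>_def ac_simps)
    have gap: "\<gamma> * (norm b)\<^sup>2 \<le> \<sigma>\<^sup>2 * (norm b)\<^sup>2 - (norm (P *v b))\<^sup>2"
      using \<gamma>(2)[OF b] by (simp add: left_diff_distrib)
    have four: "4 * \<sigma> * spec_norm H * norm b = 4 * k"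
      by (simp add: k_def)
    define L where "L = 2 * ((P *v a) \<bullet> (H *v b) + (P *v b) \<bullet> (H *v a))"
    have "L \<le> 4 * k"
      using add_mono[OF x1 x2] by (simp add: L_def)
    then show ?thesis
      unfolding eq four L_def[symmetric] using gap by linarith
  qed
  with \<gamma>(1) show ?thesis
    by (rule that)
qed

lemma bdd_above_coeff2: "bdd_above ((\<lambda>(a, b). coeff2 Z a b) ` (Amax \<times> Vperp))"
proof -
  obtain \<gamma> where \<gamma>: "0 < \<gamma>"
    and le: "\<And>Z a b. norm a \<le> 1 \<Longrightarrow> b \<in> Vperp \<Longrightarrow>
      coeff2 Z a b \<le> coeff2 Z a 0 + 4 * \<sigma> * spec_norm H * norm b - \<gamma> * (norm b)\<^sup>2"
    using coeff2_le_coeff2_zero by blast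
  define c where "c = 4 * \<sigma> * spec_norm H"
  have "coeff2 Z a b \<le> (spec_norm H)\<^sup>2 + \<sigma> * spec_norm Z + c\<^sup>2 / (4 * \<gamma>)"
    if "a \<in> Amax" "b \<in> Vperp" for a b
  proof -
    have a1: "norm a = 1"
      using Amax_D(2)[OF that(1)] .
    have "(norm (H *v a))\<^sup>2 \<le> (spec_norm H)\<^sup>2"
      using norm_matrix_vector_le_spec_norm[of H a] a1 by (simp add: power_mono)
    moreover have "(P *v a) \<bullet> (Z *v a) \<le> \<sigma> * spec_norm Z"
      using abs_inner_matrix_vector_le[of P a Z a] a1 by (simp add: \<sigma>_def)
    moreover have "c * norm b - \<gamma> * (norm b)\<^sup>2 \<le> c\<^sup>2 / (4 * \<gamma>)"
    proof -
      have "0 \<le> (2 * \<gamma> * norm b - c)\<^sup>2"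
        by simp
      then have "(c * norm b - \<gamma> * (norm b)\<^sup>2) * (4 * \<gamma>) \<le> c\<^sup>2"
        by (simp add: power2_eq_square algebra_simps)
      then show ?thesis
        using \<gamma> by (simp add: pos_le_divide_eq)
    qed
    ultimately show ?thesis
      using le[of a b Z] a1 that(2) by (simp add: coeff2_zero c_def)
  qed
  then show ?thesis
    by (auto intro!: bdd_aboveI2)
qed

lemma coeff2_le_nu: "a \<in> Amax \<Longrightarrow> b \<in> Vperp \<Longrightarrow> coeff2 Z a b \<le> \<nu> Z"
  unfolding \<nu>_def using bdd_above_coeff2[of Z] by (intro cSUP_upper2[where x="(a, b)"]) auto

lemma nu_le_bounded:
  obtains R where "0 < R"
    "\<And>Z c. (\<And>a b. a \<in> Amax \<Longrightarrow> b \<in> Vperp \<Longrightarrow> norm b \<le> R \<Longrightarrow> coeff2 Z a b \<le> c) \<Longrightarrow> \<nu> Z \<le> c"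
proof -
  obtain \<gamma> where \<gamma>: "0 < \<gamma>"
    and le: "\<And>Z a b. norm a \<le> 1 \<Longrightarrow> b \<in> Vperp \<Longrightarrow>
      coeff2 Z a b \<le> coeff2 Z a 0 + 4 * \<sigma> * spec_norm H * norm b - \<gamma> * (norm b)\<^sup>2"
    using coeff2_le_coeff2_zero by blast
  define R where "R = 4 * \<sigma> * spec_norm H / \<gamma> + 1"
  have "0 < R"
    using \<gamma> sigma_pos spec_norm_nonneg[of H] by (simp add: R_def add_nonneg_pos)
  moreover have "\<nu> Z \<le> c"
    if bounded: "\<And>a b. a \<in> Amax \<Longrightarrow> b \<in> Vperp \<Longrightarrow> norm b \<le> R \<Longrightarrow> coeff2 Z a b \<le> c" for Z c
    unfolding \<nu>_def
  proof (rule cSUP_least)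
    show "Amax \<times> Vperp \<noteq> {}"
      using Amax_nonempty subspace_Vperp by (auto simp: subspace_def)
    fix ab
    assume "ab \<in> Amax \<times> Vperp"
    then obtain a b where ab: "ab = (a, b)" "a \<in> Amax" "b \<in> Vperp"
      by blast
    have "0 \<in> Vperp"
      using subspace_Vperp by (simp add: subspace_def)
    show "(\<lambda>(a, b). coeff2 Z a b) ab \<le> c"
    proof (cases "norm b \<le> R")
      case False
      then have "4 * \<sigma> * spec_norm H \<le> \<gamma> * norm b"
        using \<gamma> by (simp add: R_def field_simps)
      then have "4 * \<sigma> * spec_norm H * norm b \<le> \<gamma> * norm b * norm b"
        by (rule mult_right_mono) simp
      then have "4 * \<sigma> * spec_norm H * norm b \<le> \<gamma> * (norm b)\<^sup>2"
        by (simp add: power2_eq_square mult.assoc)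
      then have "coeff2 Z a b \<le> coeff2 Z a 0"
        using le[of a b Z] Amax_D(2)[OF ab(2)] ab(3) by simp
      also have "\<dots> \<le> c"
        using bounded[OF ab(2) \<open>0 \<in> Vperp\<close>] \<open>0 < R\<close> by simp
      finally show ?thesis
        using ab(1) by simp
    qed (use ab bounded in auto)
  qed
  ultimately show ?thesis
    by (rule that)
qed

lemma power2_norm_Vmax_add_Vperp:
  assumes "a \<in> Vmax" "b \<in> Vperp"
  shows "(norm (a + s *\<^sub>R b))\<^sup>2 = (norm a)\<^sup>2 + s\<^sup>2 * (norm b)\<^sup>2"
  using Vmax_Vperp_orthogonal(1)[OF assms] by (simp add: power2_norm_add_scaleR)

lemma spec_norm_sq_ge_test_vector:
  assumes "a \<in> Amax" "b \<in> Vperp"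
  shows "(norm (A *v (a + t *\<^sub>R b)))\<^sup>2 / (1 + t\<^sup>2 * (norm b)\<^sup>2) \<le> (spec_norm A)\<^sup>2"
proof -
  have "(norm (a + t *\<^sub>R b))\<^sup>2 = 1 + t\<^sup>2 * (norm b)\<^sup>2"
    using power2_norm_Vmax_add_Vperp[OF Amax_D(1)[OF assms(1)] assms(2)] Amax_D(2)[OF assms(1)]
    by simp
  moreover have "0 < 1 + t\<^sup>2 * (norm b)\<^sup>2"
    by (simp add: add_pos_nonneg)
  ultimately show ?thesis
    using power2_norm_matrix_vector_le[of A "a + t *\<^sub>R b"] by (simp add: divide_le_eq)
qed

lemma test_vector_expansion:
  assumes a: "a \<in> Amax" and b: "b \<in> Vperp" and t: "t \<noteq> 0"
  shows "(norm ((P + t *\<^sub>R h) *v (a + t *\<^sub>R b)))\<^sup>2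
    = (1 + t\<^sup>2 * (norm b)\<^sup>2) * (\<sigma>\<^sup>2 + t * \<mu> + t\<^sup>2 * coeff2 ((2 / t) *\<^sub>R (h - H)) a b)
      - t\<^sup>2 * (norm b)\<^sup>2 * (t * \<mu> + t\<^sup>2 * coeff2 ((2 / t) *\<^sub>R (h - H)) a b)
      + t\<^sup>2 * (2 * ((P *v a) \<bullet> ((h - H) *v b))
        + ((norm (P *v b + h *v a + t *\<^sub>R (h *v b)))\<^sup>2 - (norm (P *v b + H *v a))\<^sup>2))"
proof -
  define Z where "Z = (2 / t) *\<^sub>R (h - H)"
  define c where "c = coeff2 Z a b"
  define w0 where "w0 = P *v b + H *v a"
  define w where "w = P *v b + h *v a + t *\<^sub>R (h *v b)"
  define xa where "xa = (P *v a) \<bullet> ((h - H) *v a)"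
  define xb where "xb = (P *v a) \<bullet> ((h - H) *v b)"
  define yh where "yh = (P *v a) \<bullet> (h *v b)"
  define yH where "yH = (P *v a) \<bullet> (H *v b)"
  define xZ where "xZ = (P *v a) \<bullet> (Z *v a)"
  have aV: "a \<in> Vmax" and a1: "norm a = 1" and amu: "2 * ((P *v a) \<bullet> (H *v a)) = \<mu>"
    using Amax_D[OF a] by auto
  have Yx: "(P + t *\<^sub>R h) *v (a + t *\<^sub>R b) = P *v a + t *\<^sub>R w"
    by (simp add: w_def matrix_vector_mult_add_rdistrib scaleR_matrix_vector_mult
        matrix_vector_right_distrib matrix_vector_mult_scaleR algebra_simps)
  have "(P *v a) \<bullet> w = \<mu> / 2 + xa + t * yh"
    using amu Vmax_Vperp_orthogonal(2)[OF aV b]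
    by (simp add: w_def xa_def yh_def inner_add_right matrix_vector_mult_diff_rdistrib
        inner_diff_right)
  then have F0_eq: "(norm ((P + t *\<^sub>R h) *v (a + t *\<^sub>R b)))\<^sup>2
      = \<sigma>\<^sup>2 + t * \<mu> + 2 * t * xa + 2 * t\<^sup>2 * yh + t\<^sup>2 * (norm w)\<^sup>2"
    unfolding Yx power2_norm_add_scaleR Vmax_power2_norm[OF aV] a1
    by (simp add: algebra_simps power2_eq_square)
  have xZ: "t * (t * xZ) = 2 * t * xa"
    using t by (simp add: Z_def xa_def xZ_def scaleR_matrix_vector_mult)
  have "c = (norm w0)\<^sup>2 + 2 * yH + xZ - \<sigma>\<^sup>2 * (norm b)\<^sup>2"
    by (simp add: c_def coeff2_def w0_def yH_def xZ_def power2_norm_add_scaleR[of _ 1, simplified]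
        inner_commute algebra_simps)
  then have "t\<^sup>2 * c = t\<^sup>2 * ((norm w0)\<^sup>2 + 2 * yH + xZ - \<sigma>\<^sup>2 * (norm b)\<^sup>2)"
    by (rule arg_cong)
  also have "\<dots> = t\<^sup>2 * (norm w0)\<^sup>2 + 2 * t\<^sup>2 * yH + t * (t * xZ) - t\<^sup>2 * \<sigma>\<^sup>2 * (norm b)\<^sup>2"
    by (simp add: algebra_simps power2_eq_square)
  finally have c_eq: "t\<^sup>2 * c = t\<^sup>2 * (norm w0)\<^sup>2 + 2 * t\<^sup>2 * yH + 2 * t * xa
      - t\<^sup>2 * \<sigma>\<^sup>2 * (norm b)\<^sup>2"
    unfolding xZ .
  have xb_eq: "xb = yh - yH"
    by (simp add: xb_def yh_def yH_def matrix_vector_mult_diff_rdistrib inner_diff_right)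
  show ?thesis
    unfolding Z_def[symmetric] c_def[symmetric] w_def[symmetric] w0_def[symmetric] xb_def[symmetric]
    using F0_eq c_eq unfolding xb_eq by (simp add: algebra_simps; linarith)
qed

lemma abs_test_vector_error_le:
  assumes a: "a \<in> Amax" and nb: "norm b \<le> R" and t: "0 \<le> t" "t \<le> 1"
    and B: "\<sigma> \<le> B" "spec_norm H \<le> B" "spec_norm h \<le> B"
  shows "\<bar>2 * ((P *v a) \<bullet> ((h - H) *v b))
      + ((norm (P *v b + h *v a + t *\<^sub>R (h *v b)))\<^sup>2 - (norm (P *v b + H *v a))\<^sup>2)\<bar>
    \<le> (2 * B * R + B * (3 * R + 2) * (1 + B * R)) * (spec_norm (h - H) + t)"
proof -
  define e where "e = spec_norm (h - H)"
  define W where "W = B * (3 * R + 2)"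
  define w0 where "w0 = P *v b + H *v a"
  define w where "w = P *v b + h *v a + t *\<^sub>R (h *v b)"
  define xb where "xb = (P *v a) \<bullet> ((h - H) *v b)"
  define q where "q = (norm w)\<^sup>2 - (norm w0)\<^sup>2"
  have a1: "norm a = 1"
    using Amax_D(2)[OF a] .
  have R: "0 \<le> R"
    using nb norm_ge_zero[of b] by linarith
  have "0 \<le> B"
    using B(1) sigma_pos by linarith
  have e: "0 \<le> e"
    by (simp add: e_def spec_norm_nonneg)
  have xb: "\<bar>xb\<bar> \<le> B * R * e"
  proof -
    have "\<bar>xb\<bar> \<le> \<sigma> * 1 * (e * norm b)"
      using abs_inner_matrix_vector_le[of P a "h - H" b] a1 by (simp add: xb_def \<sigma>_def e_def)
    also have "\<dots> \<le> B * R * e"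
    proof -
      have "\<sigma> * norm b \<le> B * R"
        using B nb sigma_pos by (intro mult_mono) auto
      then have "e * (\<sigma> * norm b) \<le> e * (B * R)"
        using e by (intro mult_left_mono) auto
      then show ?thesis
        by (simp add: ac_simps)
    qed
    finally show ?thesis .
  qed
  have q: "\<bar>q\<bar> \<le> (e + t * B * R) * W"
  proof -
    have nPb: "norm (P *v b) \<le> B * R" and nhb: "norm (h *v b) \<le> B * R"
      and nHa: "norm (H *v a) \<le> B" and nha: "norm (h *v a) \<le> B"
      using norm_matrix_vector_le_mult[of P B b R] norm_matrix_vector_le_mult[of h B b R]
        norm_matrix_vector_le_mult[of H B a 1] norm_matrix_vector_le_mult[of h B a 1]
        B nb a1 by (simp_all add: \<sigma>_def)
    have "w - w0 = (h - H) *v a + t *\<^sub>R (h *v b)"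
      by (simp add: w_def w0_def matrix_vector_mult_diff_rdistrib)
    moreover have "norm ((h - H) *v a) \<le> e"
      using norm_matrix_vector_le_mult[of "h - H" e a 1] a1 by (simp add: e_def)
    moreover have "norm (t *\<^sub>R (h *v b)) \<le> t * (B * R)"
      using nhb t by (simp add: mult_left_mono)
    ultimately have dw: "norm (w - w0) \<le> e + t * B * R"
      using norm_triangle_ineq[of "(h - H) *v a" "t *\<^sub>R (h *v b)"] by (simp add: ac_simps)
    have "norm (t *\<^sub>R (h *v b)) \<le> B * R"
      using nhb t mult_left_le_one_le[of "norm (h *v b)" t] by simp
    then have "norm w \<le> B * R + B + B * R"
      using norm_triangle_ineq[of "P *v b + h *v a" "t *\<^sub>R (h *v b)"]
        norm_triangle_ineq[of "P *v b" "h *v a"] nPb nha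
      by (simp add: w_def)
    moreover have "norm w0 \<le> B * R + B"
      using norm_triangle_ineq[of "P *v b" "H *v a"] nPb nHa by (simp add: w0_def)
    moreover have "W = 3 * (B * R) + 2 * B"
      by (simp add: W_def algebra_simps)
    ultimately have "norm w + norm w0 \<le> W"
      by linarith
    then have "norm (w - w0) * (norm w + norm w0) \<le> (e + t * B * R) * W"
      using dw e t \<open>0 \<le> B\<close> R by (intro mult_mono) auto
    then show ?thesis
      using abs_power2_norm_diff_le[of w w0] by (simp add: q_def)
  qed
  have "0 \<le> B * R * e" "0 \<le> W"
    using \<open>0 \<le> B\<close> R e by (simp_all add: W_def)
  moreover have "(1 + B * R) * (e + t) - (e + t * B * R) = t + B * R * e"
    by (simp add: algebra_simps)
  ultimately have "(e + t * B * R) * W \<le> ((1 + B * R) * (e + t)) * W"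
    using t by (intro mult_right_mono) auto
  moreover have "B * R * e \<le> B * R * (e + t)"
    using \<open>0 \<le> B\<close> R t by (intro mult_left_mono) auto
  moreover have "(2 * B * R + W * (1 + B * R)) * (e + t)
      = 2 * (B * R * (e + t)) + ((1 + B * R) * (e + t)) * W"
    by (simp add: algebra_simps)
  moreover have "\<bar>2 * xb + q\<bar> \<le> 2 * \<bar>xb\<bar> + \<bar>q\<bar>"
    using abs_triangle_ineq[of "2 * xb" q] by simp
  ultimately have "\<bar>2 * xb + q\<bar> \<le> (2 * B * R + W * (1 + B * R)) * (e + t)"
    using xb q by linarith
  then show ?thesis
    by (simp add: xb_def q_def w_def w0_def W_def e_def)
qed

lemma abs_mu_add_coeff2_le:
  assumes a: "a \<in> Amax" and nb: "norm b \<le> R" and t: "0 < t" "t \<le> 1"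
    and B: "\<sigma> \<le> B" "spec_norm H \<le> B" "1 \<le> B" and e1: "spec_norm (h - H) \<le> 1"
  shows "\<bar>\<mu> + t * coeff2 ((2 / t) *\<^sub>R (h - H)) a b\<bar> \<le> 3 * B\<^sup>2 + 4 * (B\<^sup>2 * R) + B\<^sup>2 * R\<^sup>2 + 2 * B"
proof -
  define xa where "xa = (P *v a) \<bullet> ((h - H) *v a)"
  define p1 where "p1 = (P *v a) \<bullet> (H *v b)"
  define p2 where "p2 = (P *v b) \<bullet> (H *v a)"
  have a1: "norm a = 1"
    using Amax_D(2)[OF a] .
  have R: "0 \<le> R"
    using nb norm_ge_zero[of b] by linarith
  have nHa: "norm (H *v a) \<le> B" and nPb: "norm (P *v b) \<le> B * R"
    using norm_matrix_vector_le_mult[of H B a 1] norm_matrix_vector_le_mult[of P B b R]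
      B nb a1 by (simp_all add: \<sigma>_def)
  have BB: "B * (B * R) = B\<^sup>2 * R"
    by (simp add: power2_eq_square)
  have p1: "\<bar>p1\<bar> \<le> B\<^sup>2 * R"
    using Cauchy_Schwarz_ineq2[of "P *v a" "H *v b"]
      mult_mono[OF norm_matrix_vector_le_mult[of P B a 1] norm_matrix_vector_le_mult[of H B b R]]
      B nb a1 R BB by (simp add: \<sigma>_def p1_def)
  have p2: "\<bar>p2\<bar> \<le> B\<^sup>2 * R"
    using Cauchy_Schwarz_ineq2[of "P *v b" "H *v a"] mult_mono[OF nPb nHa] B R BB
    by (simp add: ac_simps p2_def)
  have Ha: "(norm (H *v a))\<^sup>2 \<le> B\<^sup>2"
    using nHa by (simp add: power_mono)
  have Pb: "0 \<le> \<sigma>\<^sup>2 * (norm b)\<^sup>2 - (norm (P *v b))\<^sup>2"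
    using power2_norm_P_le[of b] by simp
  have sb: "\<sigma>\<^sup>2 * (norm b)\<^sup>2 \<le> B\<^sup>2 * R\<^sup>2"
    using B nb sigma_pos by (intro mult_mono power_mono) auto
  have "coeff2 0 a b = (norm (H *v a))\<^sup>2 + 2 * p1 + 2 * p2 - (\<sigma>\<^sup>2 * (norm b)\<^sup>2 - (norm (P *v b))\<^sup>2)"
    by (simp add: coeff2_def p1_def p2_def)
  then have c0: "\<bar>coeff2 0 a b\<bar> \<le> B\<^sup>2 + 4 * (B\<^sup>2 * R) + B\<^sup>2 * R\<^sup>2"
    using abs_le_D1[OF p1] abs_le_D2[OF p1] abs_le_D1[OF p2] abs_le_D2[OF p2] Ha Pb sb
      zero_le_power2[of "norm (H *v a)"] zero_le_power2[of "norm (P *v b)"]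
    by (intro abs_leI) linarith+
  define Z where "Z = (2 / t) *\<^sub>R (h - H)"
  define z where "z = (P *v a) \<bullet> (Z *v a)"
  have "t * z = 2 * xa"
    using t by (simp add: z_def Z_def xa_def scaleR_matrix_vector_mult)
  moreover have "coeff2 Z a b = coeff2 0 a b + z"
    by (simp add: coeff2_def z_def)
  ultimately have "\<mu> + t * coeff2 ((2 / t) *\<^sub>R (h - H)) a b = \<mu> + t * coeff2 0 a b + 2 * xa"
    unfolding Z_def[symmetric] by (simp add: distrib_left)
  moreover have "\<bar>xa\<bar> \<le> B"
    using abs_inner_matrix_vector_le[of P a "h - H" a] a1 B e1 sigma_pos spec_norm_nonneg[of "h - H"]
      mult_mono[of \<sigma> B "spec_norm (h - H)" 1]
    by (simp add: xa_def \<sigma>_def)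
  moreover have "\<bar>t * coeff2 0 a b\<bar> \<le> \<bar>coeff2 0 a b\<bar>"
    using t by (simp add: abs_mult mult_left_le_one_le)
  moreover have "\<bar>\<mu>\<bar> \<le> 2 * B\<^sup>2"
    using abs_mu_le mult_mono[OF B(1) B(2)] sigma_pos spec_norm_nonneg[of H] B(3)
    by (simp add: power2_eq_square)
  moreover have "\<bar>\<mu> + t * coeff2 0 a b + 2 * xa\<bar> \<le> \<bar>\<mu>\<bar> + \<bar>t * coeff2 0 a b\<bar> + 2 * \<bar>xa\<bar>"
    using abs_triangle_ineq[of "\<mu> + t * coeff2 0 a b" "2 * xa"]
      abs_triangle_ineq[of \<mu> "t * coeff2 0 a b"] abs_mult[of 2 xa] by linarith
  ultimately show ?thesis
    using c0 by linarith
qed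

text \<open>The test vector \<open>a + t b\<close> gives a lower bound for \<open>\<parallel>P + t h\<parallel>\<^sup>2\<close> that is uniform in
  \<open>h\<close> near \<open>H\<close>; the matrix \<open>(2/t)(h - H)\<close> plays the role of \<open>Z\<close>.\<close>
lemma spec_norm_sq_lower_pointwise:
  assumes R: "0 \<le> R"
  obtains C where "\<And>t h a b. 0 < t \<Longrightarrow> t \<le> 1 \<Longrightarrow> spec_norm (h - H) \<le> 1 \<Longrightarrow>
    a \<in> Amax \<Longrightarrow> b \<in> Vperp \<Longrightarrow> norm b \<le> R \<Longrightarrow>
    \<sigma>\<^sup>2 + t * \<mu> + t\<^sup>2 * coeff2 ((2 / t) *\<^sub>R (h - H)) a b - C * t\<^sup>2 * (spec_norm (h - H) + t)
      \<le> (spec_norm (P + t *\<^sub>R h))\<^sup>2"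
proof -
  define B where "B = \<sigma> + spec_norm H + 1"
  define C1 where "C1 = 2 * B * R + B * (3 * R + 2) * (1 + B * R)"
  define C2 where "C2 = 3 * B\<^sup>2 + 4 * (B\<^sup>2 * R) + B\<^sup>2 * R\<^sup>2 + 2 * B"
  have B: "\<sigma> \<le> B" "spec_norm H \<le> B" "1 \<le> B"
    using sigma_pos spec_norm_nonneg[of H] by (auto simp: B_def)
  have "\<sigma>\<^sup>2 + t * \<mu> + t\<^sup>2 * coeff2 ((2 / t) *\<^sub>R (h - H)) a b
      - (C1 + R\<^sup>2 * C2) * t\<^sup>2 * (spec_norm (h - H) + t) \<le> (spec_norm (P + t *\<^sub>R h))\<^sup>2"
    if t: "0 < t" "t \<le> 1" and e1: "spec_norm (h - H) \<le> 1"
      and a: "a \<in> Amax" and b: "b \<in> Vperp" and nb: "norm b \<le> R" for t h a b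
  proof -
    define e where "e = spec_norm (h - H)"
    define c where "c = coeff2 ((2 / t) *\<^sub>R (h - H)) a b"
    define E where "E = 2 * ((P *v a) \<bullet> ((h - H) *v b))
      + ((norm (P *v b + h *v a + t *\<^sub>R (h *v b)))\<^sup>2 - (norm (P *v b + H *v a))\<^sup>2)"
    have "spec_norm h \<le> B"
      using spec_norm_triangle[of H "h - H"] e1 sigma_pos by (simp add: B_def)
    then have E: "\<bar>E\<bar> \<le> C1 * (e + t)"
      using abs_test_vector_error_le[OF a nb _ t(2) B(1,2)] t by (simp add: E_def C1_def e_def)
    have mc: "\<bar>\<mu> + t * c\<bar> \<le> C2"
      using abs_mu_add_coeff2_le[OF a nb t B e1] by (simp add: c_def C2_def)
    have e: "0 \<le> e"
      by (simp add: e_def spec_norm_nonneg)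
    have "\<bar>t\<^sup>2 * (norm b)\<^sup>2 * (t * \<mu> + t\<^sup>2 * c) - t\<^sup>2 * E\<bar> \<le> (C1 + R\<^sup>2 * C2) * t\<^sup>2 * (e + t)"
    proof -
      have "t\<^sup>2 * (norm b)\<^sup>2 * (t * \<mu> + t\<^sup>2 * c) = (t\<^sup>2 * ((norm b)\<^sup>2 * t)) * (\<mu> + t * c)"
        by (simp add: power2_eq_square algebra_simps)
      then have "\<bar>t\<^sup>2 * (norm b)\<^sup>2 * (t * \<mu> + t\<^sup>2 * c)\<bar> = \<bar>t\<^sup>2 * ((norm b)\<^sup>2 * t)\<bar> * \<bar>\<mu> + t * c\<bar>"
        by (simp only: abs_mult)
      also have "\<dots> = (t\<^sup>2 * ((norm b)\<^sup>2 * t)) * \<bar>\<mu> + t * c\<bar>"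
        using t by simp
      also have "\<dots> \<le> (t\<^sup>2 * (R\<^sup>2 * (e + t))) * C2"
        using t e nb mc by (intro mult_mono mult_left_mono power_mono) auto
      finally have 1: "\<bar>t\<^sup>2 * (norm b)\<^sup>2 * (t * \<mu> + t\<^sup>2 * c)\<bar> \<le> (t\<^sup>2 * (R\<^sup>2 * (e + t))) * C2" .
      have 2: "\<bar>t\<^sup>2 * E\<bar> \<le> t\<^sup>2 * (C1 * (e + t))"
        using E by (simp add: abs_mult mult_left_mono)
      have "(C1 + R\<^sup>2 * C2) * t\<^sup>2 * (e + t) = (t\<^sup>2 * (R\<^sup>2 * (e + t))) * C2 + t\<^sup>2 * (C1 * (e + t))"
        by (simp add: algebra_simps)
      then show ?thesis
        using 1 2 abs_triangle_ineq4[of "t\<^sup>2 * (norm b)\<^sup>2 * (t * \<mu> + t\<^sup>2 * c)" "t\<^sup>2 * E"]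
        by linarith
    qed
    moreover have "(norm ((P + t *\<^sub>R h) *v (a + t *\<^sub>R b)))\<^sup>2
        = (1 + t\<^sup>2 * (norm b)\<^sup>2) * (\<sigma>\<^sup>2 + t * \<mu> + t\<^sup>2 * c) - (t\<^sup>2 * (norm b)\<^sup>2 * (t * \<mu> + t\<^sup>2 * c) - t\<^sup>2 * E)"
      using test_vector_expansion[OF a b, of t h] t by (simp add: c_def E_def)
    moreover have "(norm ((P + t *\<^sub>R h) *v (a + t *\<^sub>R b)))\<^sup>2 / (1 + t\<^sup>2 * (norm b)\<^sup>2)
        \<le> (spec_norm (P + t *\<^sub>R h))\<^sup>2"
      by (rule spec_norm_sq_ge_test_vector[OF a b])
    ultimately show ?thesis
      using lower_bound_from_quotient[of "1 + t\<^sup>2 * (norm b)\<^sup>2"] by (simp add: c_def e_def)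
  qed
  then show ?thesis
    by (rule that)
qed

lemma spec_norm_sq_lower_uniform:
  obtains C where "\<And>t h. 0 < t \<Longrightarrow> t \<le> 1 \<Longrightarrow> spec_norm (h - H) \<le> 1 \<Longrightarrow>
    \<sigma>\<^sup>2 + t * \<mu> + t\<^sup>2 * \<nu> ((2 / t) *\<^sub>R (h - H)) - C * t\<^sup>2 * (spec_norm (h - H) + t)
      \<le> (spec_norm (P + t *\<^sub>R h))\<^sup>2"
proof -
  obtain R where "0 < R" and nu_le: "\<And>Z c. (\<And>a b. a \<in> Amax \<Longrightarrow> b \<in> Vperp \<Longrightarrow> norm b \<le> R \<Longrightarrow>
      coeff2 Z a b \<le> c) \<Longrightarrow> \<nu> Z \<le> c"
    using nu_le_bounded by blast
  then obtain C where C: "\<And>t h a b. 0 < t \<Longrightarrow> t \<le> 1 \<Longrightarrow> spec_norm (h - H) \<le> 1 \<Longrightarrow>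
      a \<in> Amax \<Longrightarrow> b \<in> Vperp \<Longrightarrow> norm b \<le> R \<Longrightarrow>
      \<sigma>\<^sup>2 + t * \<mu> + t\<^sup>2 * coeff2 ((2 / t) *\<^sub>R (h - H)) a b - C * t\<^sup>2 * (spec_norm (h - H) + t)
        \<le> (spec_norm (P + t *\<^sub>R h))\<^sup>2"
    using spec_norm_sq_lower_pointwise[of R] by auto
  have "\<sigma>\<^sup>2 + t * \<mu> + t\<^sup>2 * \<nu> ((2 / t) *\<^sub>R (h - H)) - C * t\<^sup>2 * (spec_norm (h - H) + t)
      \<le> (spec_norm (P + t *\<^sub>R h))\<^sup>2"
    if t: "0 < t" "t \<le> 1" and h: "spec_norm (h - H) \<le> 1" for t h
  proof -
    define c where "c = ((spec_norm (P + t *\<^sub>R h))\<^sup>2 - \<sigma>\<^sup>2 - t * \<mu>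
      + C * t\<^sup>2 * (spec_norm (h - H) + t)) / t\<^sup>2"
    have "\<nu> ((2 / t) *\<^sub>R (h - H)) \<le> c"
    proof (rule nu_le)
      fix a b
      assume "a \<in> Amax" "b \<in> Vperp" "norm b \<le> R"
      then show "coeff2 ((2 / t) *\<^sub>R (h - H)) a b \<le> c"
        using C[OF t h] t by (simp add: c_def pos_le_divide_eq algebra_simps)
    qed
    then show ?thesis
      using t by (simp add: c_def pos_le_divide_eq algebra_simps)
  qed
  then show ?thesis
    by (rule that)
qed

lemma spec_norm_maximizer_decomp:
  obtains a b where "a \<in> Vmax" "b \<in> Vperp" "(norm a)\<^sup>2 + (norm b)\<^sup>2 = 1"
    "(spec_norm A)\<^sup>2 = (norm (A *v (a + b)))\<^sup>2"
proof -
  obtain x where x: "norm x = 1" "norm (A *v x) = spec_norm A"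
    using spec_norm_attained by blast
  obtain a b where ab: "a \<in> Vmax" "b \<in> Vperp" "x = a + b"
    by (rule Vmax_Vperp_decomp)
  have "(norm x)\<^sup>2 = (norm a)\<^sup>2 + (norm b)\<^sup>2"
    using power2_norm_Vmax_add_Vperp[OF ab(1,2), of 1] ab(3) by simp
  with ab x show ?thesis
    by (intro that) auto
qed

lemma matrix_curve_mult:
  "(P + t *\<^sub>R H + (t\<^sup>2 / 2) *\<^sub>R Z) *v (a + t *\<^sub>R b) = P *v a + t *\<^sub>R (P *v b + H *v a)
    + t\<^sup>2 *\<^sub>R (H *v b + (1/2) *\<^sub>R (Z *v a)) + t^3 *\<^sub>R ((1/2) *\<^sub>R (Z *v b))"
  by (simp add: matrix_vector_mult_add_rdistrib scaleR_matrix_vector_mult matrix_vector_right_distrib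
      matrix_vector_mult_scaleR algebra_simps power2_eq_square power3_eq_cube)

lemma Vmax_Vperp_unit:
  assumes a: "a \<in> Vmax" and b: "b \<in> Vperp" and n: "(norm a)\<^sup>2 + (norm b)\<^sup>2 = 1"
  shows "norm (a + b) = 1" "norm a \<le> 1" "norm b \<le> 1"
proof -
  show "norm (a + b) = 1"
    using power2_norm_Vmax_add_Vperp[OF a b, of 1] n power2_eq_iff_nonneg[of "norm (a + b)" 1]
    by simp
  have "(norm a)\<^sup>2 \<le> 1\<^sup>2" "(norm b)\<^sup>2 \<le> 1\<^sup>2"
    unfolding power_one using n zero_le_power2[of "norm a"] zero_le_power2[of "norm b"]
    by linarith+
  then show "norm a \<le> 1" "norm b \<le> 1"
    by (simp_all add: power2_le_imp_le)
qed

lemma curve_mult_vector: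
  "(P + t *\<^sub>R H + (t\<^sup>2 / 2) *\<^sub>R Z) *v y = P *v y + t *\<^sub>R (H *v y + (t / 2) *\<^sub>R (Z *v y))"
  by (simp add: matrix_vector_mult_add_rdistrib scaleR_matrix_vector_mult scaleR_add_right
      power2_eq_square)

lemma spec_norm_sq_curve_lower:
  "\<sigma>\<^sup>2 + t * \<mu> - t\<^sup>2 * (\<sigma> * spec_norm Z) \<le> (spec_norm (P + t *\<^sub>R H + (t\<^sup>2 / 2) *\<^sub>R Z))\<^sup>2"
proof -
  obtain a where a: "a \<in> Amax"
    using Amax_nonempty by blast
  define v where "v = H *v a + (t / 2) *\<^sub>R (Z *v a)"
  define z where "z = (P *v a) \<bullet> (Z *v a)"
  have "(norm ((P + t *\<^sub>R H + (t\<^sup>2 / 2) *\<^sub>R Z) *v a))\<^sup>2 \<le> (spec_norm (P + t *\<^sub>R H + (t\<^sup>2 / 2) *\<^sub>R Z))\<^sup>2"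
    using power2_norm_matrix_vector_le[of _ a] Amax_D(2)[OF a] by simp
  moreover have "(norm ((P + t *\<^sub>R H + (t\<^sup>2 / 2) *\<^sub>R Z) *v a))\<^sup>2
      = \<sigma>\<^sup>2 + t * (2 * ((P *v a) \<bullet> v)) + t\<^sup>2 * (norm v)\<^sup>2"
    unfolding curve_mult_vector v_def[symmetric] power2_norm_add_scaleR
    using Vmax_power2_norm[OF Amax_D(1)[OF a]] Amax_D(2)[OF a] by simp
  moreover have "t * (2 * ((P *v a) \<bullet> v)) = t * \<mu> + t\<^sup>2 * z"
    using Amax_D(3)[OF a] by (simp add: v_def z_def inner_add_right algebra_simps power2_eq_square)
  moreover have "- (t\<^sup>2 * (\<sigma> * spec_norm Z)) \<le> t\<^sup>2 * z"
    using abs_inner_matrix_vector_le[of P a Z a] Amax_D(2)[OF a]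
      mult_left_mono[of "- (\<sigma> * spec_norm Z)" z "t\<^sup>2"] by (simp add: \<sigma>_def z_def)
  moreover have "0 \<le> t\<^sup>2 * (norm v)\<^sup>2"
    by simp
  ultimately show ?thesis
    by linarith
qed

lemma inner_P_H_decomp_le:
  assumes a: "a \<in> Vmax" and b: "b \<in> Vperp" and n: "(norm a)\<^sup>2 + (norm b)\<^sup>2 = 1"
  shows "2 * ((P *v (a + b)) \<bullet> (H *v (a + b))) \<le> \<mu> + (\<bar>\<mu>\<bar> + 4 * (\<sigma> * spec_norm H)) * norm b"
proof -
  define k where "k = \<sigma> * spec_norm H * norm b"
  note unit = Vmax_Vperp_unit[OF a b n]
  have ab: "(P *v a) \<bullet> (H *v b) \<le> k"
    using abs_inner_matrix_vector_le[of P a H b] mult_left_mono[OF unit(2), of "\<sigma> * spec_norm H * norm b"]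
      sigma_pos spec_norm_nonneg[of H] by (simp add: k_def \<sigma>_def ac_simps)
  have bx: "(P *v b) \<bullet> (H *v (a + b)) \<le> k"
    using abs_inner_matrix_vector_le[of P b H "a + b"] unit(1) by (simp add: k_def \<sigma>_def ac_simps)
  have "(P *v (a + b)) \<bullet> (H *v (a + b))
      = (P *v a) \<bullet> (H *v a) + (P *v a) \<bullet> (H *v b) + (P *v b) \<bullet> (H *v (a + b))"
    by (simp add: matrix_vector_right_distrib inner_add_left inner_add_right)
  moreover have "2 * ((P *v a) \<bullet> (H *v a)) \<le> \<mu> - \<mu> * (norm b)\<^sup>2"
  proof -
    have "(norm a)\<^sup>2 = 1 - (norm b)\<^sup>2"
      using n by simp
    then show ?thesis
      using mu_ge[OF a] by (simp add: right_diff_distrib)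
  qed
  moreover have "- (\<mu> * (norm b)\<^sup>2) \<le> \<bar>\<mu>\<bar> * norm b"
  proof -
    have "(norm b)\<^sup>2 \<le> norm b"
      using unit(3) by (simp add: power2_eq_square mult_left_le_one_le)
    then have "\<bar>\<mu>\<bar> * (norm b)\<^sup>2 \<le> \<bar>\<mu>\<bar> * norm b"
      by (simp add: mult_left_mono)
    moreover have "- (\<mu> * (norm b)\<^sup>2) \<le> \<bar>\<mu>\<bar> * (norm b)\<^sup>2"
      by (simp add: abs_if)
    ultimately show ?thesis by linarith
  qed
  moreover have "(\<bar>\<mu>\<bar> + 4 * (\<sigma> * spec_norm H)) * norm b = \<bar>\<mu>\<bar> * norm b + 4 * k"
    by (simp add: k_def algebra_simps)
  ultimately show ?thesis
    using ab bx by linarith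
qed

lemma spec_norm_sq_curve_upper:
  assumes gap: "\<And>b. b \<in> Vperp \<Longrightarrow> (norm (P *v b))\<^sup>2 \<le> (\<sigma>\<^sup>2 - \<gamma>) * (norm b)\<^sup>2"
    and t: "0 < t" "t \<le> 1" and a: "a \<in> Vmax" and b: "b \<in> Vperp"
    and n: "(norm a)\<^sup>2 + (norm b)\<^sup>2 = 1"
  shows "(norm ((P + t *\<^sub>R H + (t\<^sup>2 / 2) *\<^sub>R Z) *v (a + b)))\<^sup>2
    \<le> \<sigma>\<^sup>2 - \<gamma> * (norm b)\<^sup>2 + t * \<mu> + t * ((\<bar>\<mu>\<bar> + 4 * (\<sigma> * spec_norm H)) * norm b)
      + t\<^sup>2 * (\<sigma> * spec_norm Z + (spec_norm H + spec_norm Z)\<^sup>2)"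
proof -
  define x where "x = a + b"
  define c where "c = \<bar>\<mu>\<bar> + 4 * (\<sigma> * spec_norm H)"
  define v where "v = H *v x + (t / 2) *\<^sub>R (Z *v x)"
  define pv where "pv = (P *v x) \<bullet> v"
  have x1: "norm x = 1"
    using Vmax_Vperp_unit(1)[OF a b n] by (simp add: x_def)
  have F_eq: "(norm ((P + t *\<^sub>R H + (t\<^sup>2 / 2) *\<^sub>R Z) *v x))\<^sup>2
      = (norm (P *v x))\<^sup>2 + 2 * t * pv + t\<^sup>2 * (norm v)\<^sup>2"
    unfolding curve_mult_vector v_def[symmetric] pv_def by (simp only: power2_norm_add_scaleR)
  have "(norm (P *v x))\<^sup>2 = \<sigma>\<^sup>2 * (norm a)\<^sup>2 + (norm (P *v b))\<^sup>2"
    using power2_norm_add_scaleR[of "P *v a" 1 "P *v b"] Vmax_Vperp_orthogonal(2)[OF a b]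
      Vmax_power2_norm[OF a] by (simp add: x_def matrix_vector_right_distrib)
  moreover have "(norm a)\<^sup>2 = 1 - (norm b)\<^sup>2"
    using n by simp
  then have "\<sigma>\<^sup>2 * (norm a)\<^sup>2 = \<sigma>\<^sup>2 - \<sigma>\<^sup>2 * (norm b)\<^sup>2"
    by (simp add: right_diff_distrib)
  moreover have "(\<sigma>\<^sup>2 - \<gamma>) * (norm b)\<^sup>2 = \<sigma>\<^sup>2 * (norm b)\<^sup>2 - \<gamma> * (norm b)\<^sup>2"
    by (simp add: left_diff_distrib)
  ultimately have Px: "(norm (P *v x))\<^sup>2 \<le> \<sigma>\<^sup>2 - \<gamma> * (norm b)\<^sup>2"
    using gap[OF b] by linarith
  have "(P *v x) \<bullet> (Z *v x) \<le> \<sigma> * spec_norm Z"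
    using abs_inner_matrix_vector_le[of P x Z x] x1 by (simp add: \<sigma>_def)
  then have "(t / 2) * ((P *v x) \<bullet> (Z *v x)) \<le> (t / 2) * (\<sigma> * spec_norm Z)"
    using t by (intro mult_left_mono) auto
  moreover have "pv = (P *v x) \<bullet> (H *v x) + (t / 2) * ((P *v x) \<bullet> (Z *v x))"
    by (simp add: pv_def v_def inner_add_right)
  ultimately have "2 * pv \<le> \<mu> + c * norm b + t * (\<sigma> * spec_norm Z)"
    using inner_P_H_decomp_le[OF a b n] by (simp add: x_def c_def)
  then have "t * (2 * pv) \<le> t * (\<mu> + c * norm b + t * (\<sigma> * spec_norm Z))"
    using t by (intro mult_left_mono) auto
  then have pv: "2 * t * pv \<le> t * \<mu> + t * (c * norm b) + t\<^sup>2 * (\<sigma> * spec_norm Z)"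
    by (simp add: algebra_simps power2_eq_square)
  have "norm v \<le> spec_norm H + spec_norm Z"
  proof -
    have "norm v \<le> norm (H *v x) + (t / 2) * norm (Z *v x)"
      using norm_triangle_ineq[of "H *v x" "(t / 2) *\<^sub>R (Z *v x)"] t by (simp add: v_def)
    moreover have "norm (H *v x) \<le> spec_norm H" "norm (Z *v x) \<le> spec_norm Z"
      using norm_matrix_vector_le_spec_norm[of H x] norm_matrix_vector_le_spec_norm[of Z x] x1
      by simp_all
    moreover have "(t / 2) * norm (Z *v x) \<le> norm (Z *v x)"
      using t mult_left_le_one_le[of "norm (Z *v x)" "t / 2"] by simp
    ultimately show ?thesis by linarith
  qed
  then have "t\<^sup>2 * (norm v)\<^sup>2 \<le> t\<^sup>2 * (spec_norm H + spec_norm Z)\<^sup>2"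
    by (intro mult_left_mono power_mono) auto
  moreover have "t\<^sup>2 * (\<sigma> * spec_norm Z + (spec_norm H + spec_norm Z)\<^sup>2)
      = t\<^sup>2 * (\<sigma> * spec_norm Z) + t\<^sup>2 * (spec_norm H + spec_norm Z)\<^sup>2"
    by (simp add: distrib_left)
  ultimately show ?thesis
    using F_eq Px pv unfolding x_def c_def by linarith
qed

text \<open>At a maximizing unit vector of \<open>P + t H + t\<^sup>2/2 Z\<close> the \<open>Vperp\<close>-component is \<open>O(t)\<close>:
  the spectral gap costs \<open>\<gamma>\<parallel>b\<parallel>\<^sup>2\<close>, which only a gain of order \<open>t \<parallel>b\<parallel> + t\<^sup>2\<close> can compensate.\<close>
lemma maximizer_Vperp_small:
  obtains K where "0 < K" "\<And>t a b. 0 < t \<Longrightarrow> t \<le> 1 \<Longrightarrow> a \<in> Vmax \<Longrightarrow> b \<in> Vperp \<Longrightarrow>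
    (norm a)\<^sup>2 + (norm b)\<^sup>2 = 1 \<Longrightarrow>
    (spec_norm (P + t *\<^sub>R H + (t\<^sup>2 / 2) *\<^sub>R Z))\<^sup>2 = (norm ((P + t *\<^sub>R H + (t\<^sup>2 / 2) *\<^sub>R Z) *v (a + b)))\<^sup>2 \<Longrightarrow>
    norm b \<le> K * t"
proof -
  obtain \<gamma> where \<gamma>: "0 < \<gamma>" "\<And>b. b \<in> Vperp \<Longrightarrow> (norm (P *v b))\<^sup>2 \<le> (\<sigma>\<^sup>2 - \<gamma>) * (norm b)\<^sup>2"
    using spectral_gap by blast
  define c where "c = \<bar>\<mu>\<bar> + 4 * (\<sigma> * spec_norm H)"
  define d where "d = 2 * (\<sigma> * spec_norm Z) + (spec_norm H + spec_norm Z)\<^sup>2"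
  have cd: "0 \<le> c" "0 \<le> d"
    using sigma_pos spec_norm_nonneg[of H] spec_norm_nonneg[of Z] by (simp_all add: c_def d_def)
  have "norm b \<le> (1 + (c + d) / \<gamma>) * t"
    if t: "0 < t" "t \<le> 1" and a: "a \<in> Vmax" and b: "b \<in> Vperp"
      and n: "(norm a)\<^sup>2 + (norm b)\<^sup>2 = 1"
      and max: "(spec_norm (P + t *\<^sub>R H + (t\<^sup>2 / 2) *\<^sub>R Z))\<^sup>2
        = (norm ((P + t *\<^sub>R H + (t\<^sup>2 / 2) *\<^sub>R Z) *v (a + b)))\<^sup>2" for t a b
  proof -
    have "t\<^sup>2 * (\<sigma> * spec_norm Z + (spec_norm H + spec_norm Z)\<^sup>2)
        = t\<^sup>2 * (\<sigma> * spec_norm Z) + t\<^sup>2 * (spec_norm H + spec_norm Z)\<^sup>2"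
      and "d * t\<^sup>2 = 2 * (t\<^sup>2 * (\<sigma> * spec_norm Z)) + t\<^sup>2 * (spec_norm H + spec_norm Z)\<^sup>2"
      and "c * t * norm b = t * (c * norm b)"
      by (simp_all add: d_def algebra_simps)
    then have "\<gamma> * (norm b)\<^sup>2 \<le> c * t * norm b + d * t\<^sup>2"
      using spec_norm_sq_curve_lower[of t Z] spec_norm_sq_curve_upper[OF \<gamma>(2) t a b n, of Z] max
      unfolding c_def[symmetric] by linarith
    then show ?thesis
      using le_linear_if_quadratic_le[OF \<gamma>(1) cd _ norm_ge_zero] t by blast
  qed
  moreover have "0 < 1 + (c + d) / \<gamma>"
    using cd \<gamma>(1) by (simp add: add_pos_nonneg)
  ultimately show ?thesis
    using that by blast
qed

definition penalty :: "real^'n \<Rightarrow> real"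
  where "penalty a = \<mu> * (norm a)\<^sup>2 - 2 * ((P *v a) \<bullet> (H *v a)) + (1 - (norm a)\<^sup>2)"

definition cubic_rest :: "real^'n^'m \<Rightarrow> real \<Rightarrow> real^'n \<Rightarrow> real^'n \<Rightarrow> real"
  where "cubic_rest Z t a b = 2 * ((P *v a) \<bullet> ((1/2) *\<^sub>R (Z *v b)))
    + 2 * ((P *v b + H *v a) \<bullet> (H *v b + (1/2) *\<^sub>R (Z *v a)))
    + t * ((norm (H *v b + (1/2) *\<^sub>R (Z *v a)))\<^sup>2 + 2 * ((P *v b + H *v a) \<bullet> ((1/2) *\<^sub>R (Z *v b))))
    + t\<^sup>2 * (2 * ((H *v b + (1/2) *\<^sub>R (Z *v a)) \<bullet> ((1/2) *\<^sub>R (Z *v b))))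
    + t^3 * (norm ((1/2) *\<^sub>R (Z *v b)))\<^sup>2 + (1 - \<mu>) * (norm b)\<^sup>2"

lemma penalty_nonneg: "a \<in> Vmax \<Longrightarrow> norm a \<le> 1 \<Longrightarrow> 0 \<le> penalty a"
  using mu_ge[of a] power_le_one[of "norm a" 2] by (simp add: penalty_def)

lemma penalty_eq_0_imp_Amax:
  assumes a: "a \<in> Vmax" "norm a \<le> 1" and "penalty a = 0"
  shows "a \<in> Amax"
proof -
  have "2 * ((P *v a) \<bullet> (H *v a)) \<le> \<mu> * (norm a)\<^sup>2"
    by (rule mu_ge[OF a(1)])
  moreover have "(norm a)\<^sup>2 \<le> 1"
    using a(2) by (simp add: power_le_one)
  ultimately have a1: "(norm a)\<^sup>2 = 1"
    using assms(3) unfolding penalty_def by linarith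
  then have "2 * ((P *v a) \<bullet> (H *v a)) = \<mu>"
    using assms(3) by (simp add: penalty_def)
  with a1 show ?thesis
    using a(1) power2_eq_iff_nonneg[of "norm a" 1] by (simp add: Amax_def)
qed

lemma curve_sq_expansion:
  assumes a: "a \<in> Vmax" and b: "b \<in> Vperp" and t: "t \<noteq> 0"
    and n: "(norm a)\<^sup>2 + t\<^sup>2 * (norm b)\<^sup>2 = 1"
  shows "(norm ((P + t *\<^sub>R H + (t\<^sup>2 / 2) *\<^sub>R Z) *v (a + t *\<^sub>R b)))\<^sup>2
    = \<sigma>\<^sup>2 + t * \<mu> + t\<^sup>2 * coeff2 Z a b - t * penalty a + t^3 * cubic_rest Z t a b"
proof -
  define u0 where "u0 = P *v a"
  define u1 where "u1 = P *v b + H *v a"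
  define u2 where "u2 = H *v b + (1/2) *\<^sub>R (Z *v a)"
  define u3 where "u3 = (1/2) *\<^sub>R (Z *v b)"
  define r where "r = 2 * (u0 \<bullet> u3) + 2 * (u1 \<bullet> u2) + t * ((norm u2)\<^sup>2 + 2 * (u1 \<bullet> u3))
    + t\<^sup>2 * (2 * (u2 \<bullet> u3)) + t^3 * (norm u3)\<^sup>2"
  have "(P + t *\<^sub>R H + (t\<^sup>2 / 2) *\<^sub>R Z) *v (a + t *\<^sub>R b) = u0 + t *\<^sub>R u1 + t\<^sup>2 *\<^sub>R u2 + t^3 *\<^sub>R u3"
    unfolding u0_def u1_def u2_def u3_def by (rule matrix_curve_mult)
  then have "(norm ((P + t *\<^sub>R H + (t\<^sup>2 / 2) *\<^sub>R Z) *v (a + t *\<^sub>R b)))\<^sup>2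
      = (norm u0)\<^sup>2 + 2 * t * (u0 \<bullet> u1) + t\<^sup>2 * ((norm u1)\<^sup>2 + 2 * (u0 \<bullet> u2)) + t^3 * r"
    unfolding r_def by (simp only: power2_norm_cubic)
  also have "\<dots> = \<sigma>\<^sup>2 * (norm a)\<^sup>2 + 2 * t * ((P *v a) \<bullet> (H *v a))
      + t\<^sup>2 * (coeff2 Z a b + \<sigma>\<^sup>2 * (norm b)\<^sup>2) + t^3 * r"
    using Vmax_power2_norm[OF a] Vmax_Vperp_orthogonal(2)[OF a b]
    by (simp add: u0_def u1_def u2_def coeff2_def inner_add_right
        power2_norm_add_scaleR[of _ 1, simplified] inner_commute algebra_simps)
  also have "\<dots> = \<sigma>\<^sup>2 + t * \<mu> + t\<^sup>2 * coeff2 Z a b - t * penalty a + t^3 * cubic_rest Z t a b"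
  proof -
    have "cubic_rest Z t a b = r + (1 - \<mu>) * (norm b)\<^sup>2"
      by (simp add: cubic_rest_def r_def u0_def u1_def u2_def u3_def)
    moreover have "(norm a)\<^sup>2 = 1 - t\<^sup>2 * (norm b)\<^sup>2"
      using n by simp
    ultimately show ?thesis
      unfolding penalty_def by algebra
  qed
  finally show ?thesis .
qed

text \<open>Writing the maximizer as \<open>a + t b\<close>, the excess \<open>(\<parallel>P + t H + t\<^sup>2/2 Z\<parallel>\<^sup>2 - \<sigma>\<^sup>2 - t \<mu>)/t\<^sup>2\<close>
  is \<open>coeff2 Z a b - penalty a / t + O(t)\<close>, and the penalty vanishes exactly on \<open>Amax\<close>.\<close>
lemma spec_norm_sq_upper:
  assumes e: "0 < e"
  shows "\<forall>\<^sub>F t in at_right 0.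
    (spec_norm (P + t *\<^sub>R H + (t\<^sup>2 / 2) *\<^sub>R Z))\<^sup>2 \<le> \<sigma>\<^sup>2 + t * \<mu> + t\<^sup>2 * (\<nu> Z + e)"
proof -
  obtain K where "0 < K" and small: "\<And>t a b. 0 < t \<Longrightarrow> t \<le> 1 \<Longrightarrow> a \<in> Vmax \<Longrightarrow> b \<in> Vperp \<Longrightarrow>
      (norm a)\<^sup>2 + (norm b)\<^sup>2 = 1 \<Longrightarrow>
      (spec_norm (P + t *\<^sub>R H + (t\<^sup>2 / 2) *\<^sub>R Z))\<^sup>2 = (norm ((P + t *\<^sub>R H + (t\<^sup>2 / 2) *\<^sub>R Z) *v (a + b)))\<^sup>2 \<Longrightarrow>
      norm b \<le> K * t"
    using maximizer_Vperp_small by blast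
  define S where "S = (Vmax \<inter> cball 0 1) \<times> (Vperp \<inter> cball 0 K)"
  have "compact (Vmax \<inter> cball 0 1)" "compact (Vperp \<inter> cball 0 K)"
    using compact_Int_closed[OF compact_cball closed_Vmax, of 0 1]
      compact_Int_closed[OF compact_cball closed_Vperp, of 0 K] by (simp_all add: Int_commute)
  then have "compact S"
    unfolding S_def by (rule compact_Times)
  have "continuous_on ({0..1} \<times> S) (\<lambda>q. cubic_rest Z (fst q) (fst (snd q)) (snd (snd q)))"
    unfolding cubic_rest_def by (intro continuous_intros continuous_on_matrix_vector_mult)
  then obtain C where C: "\<And>q. q \<in> {0..1} \<times> S \<Longrightarrow> cubic_rest Z (fst q) (fst (snd q)) (snd (snd q)) \<le> C"
    using bounded_imp_bdd_above[OF compact_imp_bounded[OF compact_continuous_image]]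
      compact_Times[OF compact_Icc \<open>compact S\<close>]
    by (fastforce simp: bdd_above_def)
  have "\<forall>\<^sub>F t in at_right 0. \<forall>p\<in>S. coeff2 Z (fst p) (snd p) - penalty (fst p) / t < \<nu> Z + e / 2"
  proof (rule eventually_penalized_less[OF \<open>compact S\<close>])
    show "continuous_on S (\<lambda>p. coeff2 Z (fst p) (snd p))" "continuous_on S (\<lambda>p. penalty (fst p))"
      unfolding penalty_def coeff2_def
      by (intro continuous_intros continuous_on_matrix_vector_mult)+
    show "0 \<le> penalty (fst p)" if "p \<in> S" for p
      using that penalty_nonneg by (auto simp: S_def)
    show "coeff2 Z (fst p) (snd p) \<le> \<nu> Z" if "p \<in> S" "penalty (fst p) = 0" for p
      using that penalty_eq_0_imp_Amax coeff2_le_nu by (auto simp: S_def)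
  qed (use e in simp)
  moreover have "\<forall>\<^sub>F t in at_right 0. t < min 1 (e / (2 * (\<bar>C\<bar> + 1)))"
    using e by (intro eventually_at_rightI[of 0 "min 1 (e / (2 * (\<bar>C\<bar> + 1)))"]) auto
  ultimately show ?thesis
    using eventually_at_right_less[of 0]
  proof eventually_elim
    case (elim t)
    define Y where "Y = P + t *\<^sub>R H + (t\<^sup>2 / 2) *\<^sub>R Z"
    obtain a b where a: "a \<in> Vmax" and b: "b \<in> Vperp" and n: "(norm a)\<^sup>2 + (norm b)\<^sup>2 = 1"
      and max: "(spec_norm Y)\<^sup>2 = (norm (Y *v (a + b)))\<^sup>2"
      by (rule spec_norm_maximizer_decomp)
    have "t * (2 * (\<bar>C\<bar> + 1)) < e"
      using elim(2) by (simp add: pos_less_divide_eq)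
    moreover have "t * (2 * (\<bar>C\<bar> + 1)) = 2 * (t * \<bar>C\<bar>) + 2 * t"
      by (simp add: algebra_simps)
    ultimately have t: "0 < t" "t \<le> 1" "t * \<bar>C\<bar> \<le> e / 2"
      using elim(2,3) by auto
    define \<beta> where "\<beta> = b /\<^sub>R t"
    have b_eq: "b = t *\<^sub>R \<beta>"
      using t by (simp add: \<beta>_def)
    have "norm b \<le> K * t"
      using small[OF t(1,2) a b n] max by (simp add: Y_def)
    moreover have "norm \<beta> * t = norm b"
      using t by (simp add: \<beta>_def)
    ultimately have "norm \<beta> * t \<le> K * t"
      by linarith
    then have "norm \<beta> \<le> K"
      using t by (simp add: mult_le_cancel_right_pos)
    moreover have "\<beta> \<in> Vperp"
      using b subspace_Vperp by (simp add: \<beta>_def subspace_def)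
    ultimately have S: "(a, \<beta>) \<in> S"
      using a Vmax_Vperp_unit(2)[OF a b n] by (simp add: S_def)
    have "(norm a)\<^sup>2 + t\<^sup>2 * (norm \<beta>)\<^sup>2 = 1"
      using n by (simp add: b_eq power_mult_distrib)
    then have "(spec_norm Y)\<^sup>2
        = \<sigma>\<^sup>2 + t * \<mu> + t\<^sup>2 * coeff2 Z a \<beta> - t * penalty a + t^3 * cubic_rest Z t a \<beta>"
      using curve_sq_expansion[OF a \<open>\<beta> \<in> Vperp\<close>, of t Z] max t(1)
      unfolding Y_def b_eq by simp
    moreover have "t\<^sup>2 * coeff2 Z a \<beta> - t * penalty a = t\<^sup>2 * (coeff2 Z a \<beta> - penalty a / t)"
      using t(1) by (simp add: power2_eq_square field_simps)
    moreover have "t\<^sup>2 * (coeff2 Z a \<beta> - penalty a / t) \<le> t\<^sup>2 * (\<nu> Z + e / 2)"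
      using elim(1) S by (intro mult_left_mono) auto
    moreover have "t^3 * cubic_rest Z t a \<beta> \<le> t\<^sup>2 * (e / 2)"
    proof -
      have "cubic_rest Z t a \<beta> \<le> C"
        using C[of "(t, a, \<beta>)"] S t by simp
      then have "t * cubic_rest Z t a \<beta> \<le> t * \<bar>C\<bar>"
        using t mult_left_mono[of "cubic_rest Z t a \<beta>" "\<bar>C\<bar>" t] by simp
      then have "t * cubic_rest Z t a \<beta> \<le> e / 2"
        using t(3) by linarith
      then show ?thesis
        using mult_left_mono[of "t * cubic_rest Z t a \<beta>" "e / 2" "t\<^sup>2"]
        by (simp add: power3_eq_cube power2_eq_square ac_simps)
    qed
    moreover have "t\<^sup>2 * (\<nu> Z + e / 2) + t\<^sup>2 * (e / 2) = t\<^sup>2 * (\<nu> Z + e)"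
      by (simp add: algebra_simps)
    ultimately have "(spec_norm Y)\<^sup>2 \<le> \<sigma>\<^sup>2 + t * \<mu> + t\<^sup>2 * (\<nu> Z + e)"
      by linarith
    then show ?case
      by (simp add: Y_def)
  qed
qed

lemma spec_norm_sq_excess_tendsto:
  "((\<lambda>t. ((spec_norm (P + t *\<^sub>R H + (t\<^sup>2 / 2) *\<^sub>R Z))\<^sup>2 - \<sigma>\<^sup>2 - t * \<mu>) / t\<^sup>2) \<longlongrightarrow> \<nu> Z)
    (at_right 0)"
proof (rule order_tendstoI)
  fix l
  assume l: "l < \<nu> Z"
  obtain C where C: "\<And>t h. 0 < t \<Longrightarrow> t \<le> 1 \<Longrightarrow> spec_norm (h - H) \<le> 1 \<Longrightarrow>
      \<sigma>\<^sup>2 + t * \<mu> + t\<^sup>2 * \<nu> ((2 / t) *\<^sub>R (h - H)) - C * t\<^sup>2 * (spec_norm (h - H) + t)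
        \<le> (spec_norm (P + t *\<^sub>R h))\<^sup>2"
    using spec_norm_sq_lower_uniform by blast
  define f where "f t = C * (t / 2 * spec_norm Z + t)" for t
  have "(f \<longlongrightarrow> C * (0 / 2 * spec_norm Z + 0)) (at_right 0)"
    unfolding f_def by (intro tendsto_intros) simp
  then have "\<forall>\<^sub>F t in at_right 0. f t < \<nu> Z - l"
    using l by (intro order_tendstoD(2)) auto
  moreover have "((\<lambda>t. t / 2 * spec_norm Z) \<longlongrightarrow> 0 / 2 * spec_norm Z) (at_right 0)"
    by (intro tendsto_intros) simp
  then have "\<forall>\<^sub>F t in at_right 0. t / 2 * spec_norm Z < 1"
    by (intro order_tendstoD(2)) auto
  moreover have "\<forall>\<^sub>F t in at_right 0. 0 < t \<and> t \<le> (1::real)"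
    by (intro eventually_at_rightI[where b="1::real"]) auto
  ultimately show "\<forall>\<^sub>F t in at_right 0.
      l < ((spec_norm (P + t *\<^sub>R H + (t\<^sup>2 / 2) *\<^sub>R Z))\<^sup>2 - \<sigma>\<^sup>2 - t * \<mu>) / t\<^sup>2"
  proof eventually_elim
    case (elim t)
    define h where "h = H + (t / 2) *\<^sub>R Z"
    have eq: "spec_norm (h - H) = t / 2 * spec_norm Z" "(2 / t) *\<^sub>R (h - H) = Z"
      "P + t *\<^sub>R h = P + t *\<^sub>R H + (t\<^sup>2 / 2) *\<^sub>R Z"
      using elim by (simp_all add: h_def spec_norm_scaleR scaleR_add_right power2_eq_square)
    have "\<sigma>\<^sup>2 + t * \<mu> + t\<^sup>2 * \<nu> Z - C * t\<^sup>2 * (t / 2 * spec_norm Z + t)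
        \<le> (spec_norm (P + t *\<^sub>R H + (t\<^sup>2 / 2) *\<^sub>R Z))\<^sup>2"
      using C[of t h, unfolded eq] elim by simp
    moreover have "(\<nu> Z - f t) * t\<^sup>2 = t\<^sup>2 * \<nu> Z - C * t\<^sup>2 * (t / 2 * spec_norm Z + t)"
      by (simp add: f_def algebra_simps)
    ultimately have "\<nu> Z - f t \<le> ((spec_norm (P + t *\<^sub>R H + (t\<^sup>2 / 2) *\<^sub>R Z))\<^sup>2 - \<sigma>\<^sup>2 - t * \<mu>) / t\<^sup>2"
      using elim by (simp add: pos_le_divide_eq)
    then show ?case
      using elim by linarith
  qed
next
  fix u
  assume u: "\<nu> Z < u"
  then have "\<forall>\<^sub>F t in at_right 0.
      (spec_norm (P + t *\<^sub>R H + (t\<^sup>2 / 2) *\<^sub>R Z))\<^sup>2 \<le> \<sigma>\<^sup>2 + t * \<mu> + t\<^sup>2 * (\<nu> Z + (u - \<nu> Z) / 2)"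
    by (intro spec_norm_sq_upper) simp
  with eventually_at_right_less[of 0]
  show "\<forall>\<^sub>F t in at_right 0.
      ((spec_norm (P + t *\<^sub>R H + (t\<^sup>2 / 2) *\<^sub>R Z))\<^sup>2 - \<sigma>\<^sup>2 - t * \<mu>) / t\<^sup>2 < u"
  proof eventually_elim
    case (elim t)
    moreover have "t\<^sup>2 * (\<nu> Z + (u - \<nu> Z) / 2) = (\<nu> Z + (u - \<nu> Z) / 2) * t\<^sup>2"
      by simp
    ultimately have "((spec_norm (P + t *\<^sub>R H + (t\<^sup>2 / 2) *\<^sub>R Z))\<^sup>2 - \<sigma>\<^sup>2 - t * \<mu>) / t\<^sup>2
        \<le> \<nu> Z + (u - \<nu> Z) / 2"
      by (simp add: pos_divide_le_eq)
    also have "\<dots> < u"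
      using u by (simp add: field_simps)
    finally show ?case .
  qed
qed

lemma spec_norm_first_order:
  "((\<lambda>t. (spec_norm (P + t *\<^sub>R H) - \<sigma>) / t) \<longlongrightarrow> \<mu> / (2 * \<sigma>)) (at_right 0)"
proof -
  define s where "s t = spec_norm (P + t *\<^sub>R H)" for t
  define r where "r = (\<lambda>t. ((s t)\<^sup>2 - \<sigma>\<^sup>2 - t * \<mu>) / t\<^sup>2)"
  have "(r \<longlongrightarrow> \<nu> 0) (at_right 0)"
    using spec_norm_sq_excess_tendsto[of 0] by (simp add: r_def s_def)
  moreover have "((\<lambda>t. P + t *\<^sub>R H) \<longlongrightarrow> P + 0 *\<^sub>R H) (at_right 0)"
    by (intro tendsto_intros)
  then have "(s \<longlongrightarrow> \<sigma>) (at_right 0)"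
    unfolding s_def \<sigma>_def by (intro tendsto_spec_norm) simp
  ultimately have "((\<lambda>t. (\<mu> + t * r t) / (s t + \<sigma>)) \<longlongrightarrow> (\<mu> + 0 * \<nu> 0) / (\<sigma> + \<sigma>)) (at_right 0)"
    using sigma_pos by (intro tendsto_intros) auto
  moreover have "(\<mu> + t * r t) / (s t + \<sigma>) = (s t - \<sigma>) / t" if t: "0 < t" for t
  proof -
    have "0 < s t + \<sigma>"
      using sigma_pos spec_norm_nonneg[of "P + t *\<^sub>R H"] unfolding s_def by linarith
    moreover have "(s t)\<^sup>2 - \<sigma>\<^sup>2 = t * (\<mu> + t * r t)"
      using t by (simp add: r_def power2_eq_square field_simps)
    then have "(s t - \<sigma>) * (s t + \<sigma>) = t * (\<mu> + t * r t)"
      by (simp add: power2_eq_square algebra_simps)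
    ultimately show ?thesis
      using t by (simp add: field_simps)
  qed
  ultimately have "((\<lambda>t. (s t - \<sigma>) / t) \<longlongrightarrow> (\<mu> + 0 * \<nu> 0) / (\<sigma> + \<sigma>)) (at_right 0)"
    by (rule Lim_transform_eventually[OF _ eventually_at_right_less[THEN eventually_mono]])
  then show ?thesis
    by (simp add: s_def)
qed

lemma dir_deriv_spec_norm: "dir_deriv spec_norm P H = \<mu> / (2 * \<sigma>)"
  unfolding dir_deriv_def using spec_norm_first_order
  by (intro tendsto_Lim[OF trivial_limit_at_right_real]) (simp add: \<sigma>_def)

lemma spec_norm_quotient_tendsto:
  assumes "(h \<longlongrightarrow> H) (at_right 0)"
  shows "((\<lambda>t. (spec_norm (P + t *\<^sub>R h t) - \<sigma>) / t) \<longlongrightarrow> \<mu> / (2 * \<sigma>)) (at_right 0)"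
proof -
  have "((\<lambda>t. (spec_norm (P + t *\<^sub>R h t) - spec_norm (P + t *\<^sub>R H)) / t
      + (spec_norm (P + t *\<^sub>R H) - \<sigma>) / t) \<longlongrightarrow> 0 + \<mu> / (2 * \<sigma>)) (at_right 0)"
    by (intro tendsto_intros spec_norm.quotient_diff_tendsto_0 assms spec_norm_first_order)
  then show ?thesis
    by (simp add: add_divide_distrib[symmetric])
qed

lemma second_dir_deriv_spec_norm_tendsto:
  "((\<lambda>t. (spec_norm (P + t *\<^sub>R H + (t\<^sup>2 / 2) *\<^sub>R Z) - \<sigma> - t * (\<mu> / (2 * \<sigma>))) / (t\<^sup>2 / 2))
    \<longlongrightarrow> \<nu> Z / \<sigma> - (\<mu> / (2 * \<sigma>))\<^sup>2 / \<sigma>) (at_right 0)"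
proof -
  have "((\<lambda>t. H + (t / 2) *\<^sub>R Z) \<longlongrightarrow> H + (0 / 2) *\<^sub>R Z) (at_right 0)"
    by (intro tendsto_intros) simp
  then have "((\<lambda>t. (spec_norm (P + t *\<^sub>R (H + (t / 2) *\<^sub>R Z)) - \<sigma>) / t) \<longlongrightarrow> \<mu> / (2 * \<sigma>)) (at_right 0)"
    by (intro spec_norm_quotient_tendsto) simp
  moreover have "P + t *\<^sub>R (H + (t / 2) *\<^sub>R Z) = P + t *\<^sub>R H + (t\<^sup>2 / 2) *\<^sub>R Z" for t
    by (simp add: scaleR_add_right power2_eq_square)
  ultimately have q: "((\<lambda>t. (spec_norm (P + t *\<^sub>R H + (t\<^sup>2 / 2) *\<^sub>R Z) - \<sigma>) / t)
      \<longlongrightarrow> \<mu> / (2 * \<sigma>)) (at_right 0)"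
    by simp
  define q where "q = (\<lambda>t. (spec_norm (P + t *\<^sub>R H + (t\<^sup>2 / 2) *\<^sub>R Z) - \<sigma>) / t)"
  define E where "E = (\<lambda>t. ((spec_norm (P + t *\<^sub>R H + (t\<^sup>2 / 2) *\<^sub>R Z))\<^sup>2 - \<sigma>\<^sup>2 - t * \<mu>) / t\<^sup>2)"
  have "((\<lambda>t. E t / \<sigma> - (q t)\<^sup>2 / \<sigma>) \<longlongrightarrow> \<nu> Z / \<sigma> - (\<mu> / (2 * \<sigma>))\<^sup>2 / \<sigma>) (at_right 0)"
    using q spec_norm_sq_excess_tendsto[of Z] sigma_pos
    unfolding q_def[symmetric] E_def[symmetric] by (intro tendsto_intros) auto
  moreover have "E t / \<sigma> - (q t)\<^sup>2 / \<sigma>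
      = (spec_norm (P + t *\<^sub>R H + (t\<^sup>2 / 2) *\<^sub>R Z) - \<sigma> - t * (\<mu> / (2 * \<sigma>))) / (t\<^sup>2 / 2)"
    if "0 < t" for t
  proof -
    have "2 * \<sigma> * (\<mu> / (2 * \<sigma>)) = \<mu>"
      using sigma_pos by simp
    then show ?thesis
      using sqrt_linearization[of \<sigma> t "spec_norm (P + t *\<^sub>R H + (t\<^sup>2 / 2) *\<^sub>R Z)" "\<mu> / (2 * \<sigma>)"]
        sigma_pos that by (simp add: q_def E_def)
  qed
  ultimately show ?thesis
    by (rule Lim_transform_eventually[OF _ eventually_at_right_less[THEN eventually_mono]])
qed

lemma second_dir_deriv_spec_norm:
  "second_dir_deriv spec_norm P H Z = \<nu> Z / \<sigma> - (\<mu> / (2 * \<sigma>))\<^sup>2 / \<sigma>"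
  unfolding second_dir_deriv_def dir_deriv_spec_norm
  using second_dir_deriv_spec_norm_tendsto[of Z]
  by (intro tendsto_Lim[OF trivial_limit_at_right_real]) (simp add: \<sigma>_def)

lemma second_dir_differentiable_spec_norm: "second_dir_differentiable spec_norm P H"
  unfolding second_dir_differentiable_def second_dir_deriv_spec_norm dir_deriv_spec_norm
  using second_dir_deriv_spec_norm_tendsto by (simp add: \<sigma>_def)

lemma second_order_regular_spec_norm: "second_order_regular spec_norm P H"
  unfolding second_order_regular_def dir_deriv_spec_norm second_dir_deriv_spec_norm
    \<sigma>_def[symmetric]
proof (intro allI impI)
  fix h :: "real \<Rightarrow> real^'n^'m" and e :: real
  assume h: "(h \<longlongrightarrow> H) (at_right 0)" and e: "0 < e"
  obtain C where C: "\<And>t h. 0 < t \<Longrightarrow> t \<le> 1 \<Longrightarrow> spec_norm (h - H) \<le> 1 \<Longrightarrow>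
      \<sigma>\<^sup>2 + t * \<mu> + t\<^sup>2 * \<nu> ((2 / t) *\<^sub>R (h - H)) - C * t\<^sup>2 * (spec_norm (h - H) + t)
        \<le> (spec_norm (P + t *\<^sub>R h))\<^sup>2"
    using spec_norm_sq_lower_uniform by blast
  define c where "c = \<mu> / (2 * \<sigma>)"
  define q where "q = (\<lambda>t. (spec_norm (P + t *\<^sub>R h t) - \<sigma>) / t)"
  define err where "err = (\<lambda>t. C * (spec_norm (h t - H) + t) / \<sigma> + ((q t)\<^sup>2 - c\<^sup>2) / \<sigma>)"
  have q: "(q \<longlongrightarrow> c) (at_right 0)"
    unfolding q_def c_def by (rule spec_norm_quotient_tendsto[OF h])
  have "((\<lambda>t. spec_norm (h t - H)) \<longlongrightarrow> spec_norm (H - H)) (at_right 0)"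
    by (intro tendsto_intros h)
  then have hH: "((\<lambda>t. spec_norm (h t - H)) \<longlongrightarrow> 0) (at_right 0)"
    by (simp add: spec_norm_zero)
  have "(err \<longlongrightarrow> C * (0 + 0) / \<sigma> + (c\<^sup>2 - c\<^sup>2) / \<sigma>) (at_right 0)"
    unfolding err_def using sigma_pos by (intro tendsto_intros hH q) auto
  then have "\<forall>\<^sub>F t in at_right 0. err t < e"
    using e by (intro order_tendstoD(2)) auto
  moreover have "\<forall>\<^sub>F t in at_right 0. spec_norm (h t - H) < 1"
    using hH by (intro order_tendstoD(2)) auto
  moreover have "\<forall>\<^sub>F t in at_right 0. 0 < t \<and> t \<le> (1::real)"
    by (intro eventually_at_rightI[where b="1::real"]) auto
  ultimately show "\<forall>\<^sub>F t in at_right 0. \<nu> ((2 / t) *\<^sub>R (h t - H)) / \<sigma> - (\<mu> / (2 * \<sigma>))\<^sup>2 / \<sigma> - e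
      \<le> (spec_norm (P + t *\<^sub>R h t) - \<sigma> - t * (\<mu> / (2 * \<sigma>))) / (t\<^sup>2 / 2)"
  proof eventually_elim
    case (elim t)
    define Zt where "Zt = (2 / t) *\<^sub>R (h t - H)"
    define s where "s = spec_norm (P + t *\<^sub>R h t)"
    define x where "x = C * (spec_norm (h t - H) + t)"
    have t: "0 < t" "t \<le> 1"
      using elim by auto
    have "\<sigma>\<^sup>2 + t * \<mu> + t\<^sup>2 * \<nu> Zt - t\<^sup>2 * x \<le> s\<^sup>2"
      using C[of t "h t"] elim by (simp add: Zt_def s_def x_def ac_simps)
    moreover have "(\<nu> Zt - x) * t\<^sup>2 = t\<^sup>2 * \<nu> Zt - t\<^sup>2 * x"
      by (simp add: algebra_simps)
    ultimately have "\<nu> Zt - x \<le> (s\<^sup>2 - \<sigma>\<^sup>2 - t * \<mu>) / t\<^sup>2"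
      using t by (simp add: pos_le_divide_eq)
    then have "(\<nu> Zt - x) / \<sigma> \<le> (s\<^sup>2 - \<sigma>\<^sup>2 - t * \<mu>) / t\<^sup>2 / \<sigma>"
      using sigma_pos by (intro divide_right_mono) auto
    moreover have "2 * \<sigma> * c = \<mu>"
      using sigma_pos by (simp add: c_def)
    then have "(s - \<sigma> - t * c) / (t\<^sup>2 / 2) = (s\<^sup>2 - \<sigma>\<^sup>2 - t * \<mu>) / t\<^sup>2 / \<sigma> - (q t)\<^sup>2 / \<sigma>"
      using sqrt_linearization[of \<sigma> t s c] sigma_pos t by (simp add: q_def s_def)
    moreover have "err t = x / \<sigma> + (q t)\<^sup>2 / \<sigma> - c\<^sup>2 / \<sigma>"
      by (simp add: err_def x_def diff_divide_distrib)
    moreover have "(\<nu> Zt - x) / \<sigma> = \<nu> Zt / \<sigma> - x / \<sigma>"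
      by (simp add: diff_divide_distrib)
    ultimately have "\<nu> Zt / \<sigma> - c\<^sup>2 / \<sigma> - e \<le> (s - \<sigma> - t * c) / (t\<^sup>2 / 2)"
      using elim by linarith
    then show ?case
      by (simp add: Zt_def s_def c_def)
  qed
qed

end

theorem proposition3p3:
  fixes P W D H :: "real^'n^'m"
  assumes "CARD('m) \<le> CARD('n)"
    and "P \<noteq> 0"
    and "W \<in> subdiff spec_norm P"
    and "has_dir_deriv (prox spec_norm) (P + W) (H + D) H"
  shows "H \<in> crit_cone spec_norm P W
         \<and> ereal (H \<bullet> D) = - psi_star spec_norm P H W"
proof -
  interpret top_singular_direction P H
    by unfold_locales (rule assms(2))
  show ?thesis
    by (rule spec_norm.prox_dir_deriv_characterization[OF assms(3,4)
      second_dir_differentiable_spec_norm second_order_regular_spec_norm])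
qed

end
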